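(* Let $E$ be a finite-dimensional real vector space ordered by a closed proper cone $C$. Let $U\subset E$ be a nonempty, order-regular, convex, open set. Let $0<T\leq \infty$ and let $f\colon [0,T)\times U\to E$ be a continuous map such that, for every $t\in[0,T)$, the map $f(t,\cdot)\colon U\to E$ is quasi-monotone increasing and convex. Then for every $t\in[0,T)$ the set $\mathcal D_f(t)$ is convex, and the map $x\mapsto \psi_f(t,x)$ is convex on $\mathcal D_f(t)$, i.e. $\psi_f(t,\lambda x+(1-\lambda)y)\leq \lambda\psi_f(t,x)+(1-\lambda)\psi_f(t,y)$ for all $x,y\in\mathcal D_f(t)$ and $\lambda\in[0,1]$.
   Context: A cone in a real vector space $E$ is a set $C$ with $\lambda C\subset C$ for all $\lambda>0$; it is proper if $C+C\subset C$ and $C\cap(-C)=\{0\}$. The partial order induced by $C$ is $x\leq y$ iff $y-x\in C$. $E^*$ is the dual space and $C^*=\{l\in E^*: l(x)\geq 0 \text{ for all } x\in C\}$ is the dual cone. For $D\subset E$, a map $g\colon D\to E$ is quasi-monotone increasing if for all $x,y\in D$ and $l\in C^*$: $x\leq y$ and $l(x)=l(y)$ imply $l(g(x))\leq l(g(y))$. A map $g\colon D\to E$ is convex if $D$ is convex and $g(\lambda x+(1-\lambda)y)\leq\lambda g(x)+(1-\lambda)g(y)$ for all $x,y\in D$, $\lambda\in[0,1]$. A set $D\subset E$ is order-regular if $x\in D$ and $y\leq x$ imply $y\in D$. Under the hypotheses, $f$ is locally Lipschitz in the second variable (uniformly for $t$ in compact subsets of $[0,T)$), so for each $x\in U$ the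 equation $\dot\psi(t)=f(t,\psi(t))$ has a unique maximally extended solution $\psi_f(\cdot,x)$ with $\psi_f(0,x)=x$, defined on $[0,\theta_f(x))$ with $0<\theta_f(x)\leq T$. For $t\geq 0$, $\mathcal D_f(t)=\{x\in U: t<\theta_f(x)\}$. *)

theory Defs
  imports "HOL-Analysis.Analysis"
begin

definition is_cone :: "'a::real_vector set \<Rightarrow> bool" where
  "is_cone C \<longleftrightarrow> (\<forall>c::real. c > 0 \<longrightarrow> (\<forall>x\<in>C. c *\<^sub>R x \<in> C))"

definition proper_cone :: "'a::real_vector set \<Rightarrow> bool" where
  "proper_cone C \<longleftrightarrow> is_cone C \<and> (\<forall>x\<in>C. \<forall>y\<in>C. x + y \<in> C) \<and> C \<inter> uminus ` C = {0}"

definition cone_le :: "'a::real_vector set \<Rightarrow> 'a \<Rightarrow> 'a \<Rightarrow> bool" where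
  "cone_le C x y \<longleftrightarrow> y - x \<in> C"

definition dual_cone :: "'a::real_vector set \<Rightarrow> ('a \<Rightarrow> real) set" where
  "dual_cone C = {l. linear l \<and> (\<forall>x\<in>C. l x \<ge> 0)}"

definition quasi_monotone_inc :: "'a::real_vector set \<Rightarrow> 'a set \<Rightarrow> ('a \<Rightarrow> 'a) \<Rightarrow> bool" where
  "quasi_monotone_inc C D g \<longleftrightarrow>
     (\<forall>x\<in>D. \<forall>y\<in>D. \<forall>l\<in>dual_cone C. cone_le C x y \<and> l x = l y \<longrightarrow> l (g x) \<le> l (g y))"

definition convex_map :: "'a::real_vector set \<Rightarrow> 'a set \<Rightarrow> ('a \<Rightarrow> 'a) \<Rightarrow> bool" where
  "convex_map C D g \<longleftrightarrow> convex D \<and>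
     (\<forall>x\<in>D. \<forall>y\<in>D. \<forall>c::real. 0 \<le> c \<and> c \<le> 1 \<longrightarrow>
        cone_le C (g (c *\<^sub>R x + (1 - c) *\<^sub>R y)) (c *\<^sub>R g x + (1 - c) *\<^sub>R g y))"

definition order_regular :: "'a::real_vector set \<Rightarrow> 'a set \<Rightarrow> bool" where
  "order_regular C D \<longleftrightarrow> (\<forall>x\<in>D. \<forall>y. cone_le C y x \<longrightarrow> y \<in> D)"

definition time_dom :: "ereal \<Rightarrow> real set" where
  "time_dom T = {t. 0 \<le> t \<and> ereal t < T}"

definition ode_sol_on ::
  "ereal \<Rightarrow> 'a::real_normed_vector set \<Rightarrow> (real \<Rightarrow> 'a \<Rightarrow> 'a) \<Rightarrow> 'a \<Rightarrow> real \<Rightarrow> (real \<Rightarrow> 'a) \<Rightarrow> bool" where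
  "ode_sol_on T U f x s \<phi> \<longleftrightarrow> 0 \<le> s \<and> ereal s < T \<and> \<phi> 0 = x \<and>
     (\<forall>\<tau>\<in>{0..s}. \<phi> \<tau> \<in> U \<and> (\<phi> has_vector_derivative f \<tau> (\<phi> \<tau>)) (at \<tau> within {0..s}))"

definition theta_f :: "ereal \<Rightarrow> 'a::real_normed_vector set \<Rightarrow> (real \<Rightarrow> 'a \<Rightarrow> 'a) \<Rightarrow> 'a \<Rightarrow> ereal" where
  "theta_f T U f x = (SUP s\<in>{s. \<exists>\<phi>. ode_sol_on T U f x s \<phi>}. ereal s)"

definition D_f :: "ereal \<Rightarrow> 'a::real_normed_vector set \<Rightarrow> (real \<Rightarrow> 'a \<Rightarrow> 'a) \<Rightarrow> real \<Rightarrow> 'a set" where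
  "D_f T U f t = {x\<in>U. ereal t < theta_f T U f x}"

definition psi_f :: "ereal \<Rightarrow> 'a::real_normed_vector set \<Rightarrow> (real \<Rightarrow> 'a \<Rightarrow> 'a) \<Rightarrow> real \<Rightarrow> 'a \<Rightarrow> 'a" where
  "psi_f T U f t x = (THE y. \<exists>s \<phi>. t \<le> s \<and> ode_sol_on T U f x s \<phi> \<and> \<phi> t = y)"

end

theory Submission
  imports Defs
begin

text \<open>
  Let \<open>x, y \<in> \<D>\<^sub>f(t)\<close> with solutions \<open>\<phi>\<^sub>x, \<phi>\<^sub>y\<close> on some \<open>[0,s0]\<close>, \<open>s0 > t\<close>.  By convexity of
  \<open>f(\<sigma>,\<cdot>)\<close> the curve \<open>w = c\<phi>\<^sub>x + (1-c)\<phi>\<^sub>y\<close> is a supersolution, \<open>f(\<sigma>,w) \<le> w'\<close>.  Everything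
  then rests on two facts about quasi-monotone equations:
  \<^item> a comparison principle: a solution starting below a supersolution stays below it
    (the squared distance of \<open>w - u\<close> to the cone obeys a Dini--Gronwall inequality);
  \<^item> existence below a supersolution: the solution from \<open>w(0)\<close> lives on all of \<open>[0,s0]\<close>.
    A priori bounds (order-boundedness plus a uniformly positive functional) confine it to a
    compact subset of \<open>U\<close>, on which \<open>f\<close> is Lipschitz; the equation truncated near this set is
    solved globally by Picard iteration, and a trapping argument shows the truncation is
    never active.
  Comparison also yields uniqueness, so \<open>\<psi>\<^sub>f\<close> is the value of any solution.
\<close>

section \<open>Real induction and Dini-type differential inequalities\<close>

text \<open>Induction along a compact interval: a property that passes from \<open>[0,\<sigma>)\<close> to \<open>\<sigma>\<close>
  and from \<open>[0,\<sigma>]\<close> to a right neighbourhood of \<open>\<sigma>\<close> holds on all of \<open>[0,\<tau>]\<close>.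
  It replaces the usual ``first exit time'' arguments.\<close>
lemma real_induction_Icc:
  fixes P :: "real \<Rightarrow> bool"
  assumes left: "\<And>\<sigma>. \<sigma> \<in> {0..\<tau>} \<Longrightarrow> (\<And>r. r \<in> {0..<\<sigma>} \<Longrightarrow> P r) \<Longrightarrow> P \<sigma>"
    and right: "\<And>\<sigma>. \<sigma> \<in> {0..<\<tau>} \<Longrightarrow> (\<And>r. r \<in> {0..\<sigma>} \<Longrightarrow> P r) \<Longrightarrow>
                  \<exists>\<delta>>0. \<forall>r. \<sigma> < r \<and> r \<le> \<tau> \<and> r - \<sigma> < \<delta> \<longrightarrow> P r"
    and s: "s \<in> {0..\<tau>}"
  shows "P s"
proof (rule ccontr)
  assume "\<not> P s"
  define B where "B = {\<sigma>\<in>{0..\<tau>}. \<not> P \<sigma>}"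
  define \<sigma>1 where "\<sigma>1 = Inf B"
  have sB: "s \<in> B" using s \<open>\<not> P s\<close> by (simp add: B_def)
  have bdd: "bdd_below B" unfolding B_def by (rule bdd_belowI[of _ 0]) auto
  have lower: "\<sigma>1 \<le> b" if "b \<in> B" for b unfolding \<sigma>1_def by (rule cInf_lower[OF that bdd])
  have \<sigma>1: "0 \<le> \<sigma>1" "\<sigma>1 \<le> \<tau>"
    using lower[OF sB] s sB by (auto simp: \<sigma>1_def B_def intro!: cInf_greatest)
  have before: "P r" if "r \<in> {0..<\<sigma>1}" for r
    using that lower[of r] \<sigma>1 by (force simp: B_def)
  have P\<sigma>1: "P \<sigma>1" using left[of \<sigma>1] \<sigma>1 before by auto
  have "\<sigma>1 < \<tau>"
    using lower[OF sB] sB P\<sigma>1 \<sigma>1 by (cases "\<sigma>1 = \<tau>") (auto simp: B_def)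
  moreover have "P r" if "r \<in> {0..\<sigma>1}" for r
    using before P\<sigma>1 that by (cases "r = \<sigma>1") auto
  ultimately obtain \<delta> where \<delta>: "\<delta> > 0" and good: "\<And>r. \<sigma>1 < r \<Longrightarrow> r \<le> \<tau> \<Longrightarrow> r - \<sigma>1 < \<delta> \<Longrightarrow> P r"
    using right[of \<sigma>1] \<sigma>1 by auto
  obtain b where bB: "b \<in> B" and "b < \<sigma>1 + \<delta>"
    using cInf_less_iff[of B "\<sigma>1 + \<delta>"] sB bdd \<delta> by (auto simp: \<sigma>1_def)
  moreover have "\<sigma>1 < b" using lower[OF bB] bB P\<sigma>1 by (cases "b = \<sigma>1") (auto simp: B_def)
  ultimately show False using good[of b] by (auto simp: B_def)
qed

lemma gronwall_dini:
  fixes h :: "real \<Rightarrow> real"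
  assumes cont: "continuous_on {0..\<tau>} h" and K: "0 \<le> K" and P: "0 \<le> P" and \<eta>: "0 < \<eta>"
    and dini: "\<And>\<sigma> \<epsilon>. \<sigma> \<in> {0..<\<tau>} \<Longrightarrow> \<epsilon> > 0 \<Longrightarrow> \<exists>\<delta>>0. \<forall>r. \<sigma> < r \<and> r \<le> \<tau> \<and> r - \<sigma> < \<delta> \<longrightarrow>
               h r \<le> h \<sigma> + (r - \<sigma>) * (P + K * max (h \<sigma>) 0 + \<epsilon>)"
    and s: "s \<in> {0..\<tau>}"
  shows "h s \<le> (max (h 0) 0 + P + \<eta>) * exp ((K + 1) * s)"
proof -
  define G0 where "G0 = max (h 0) 0 + P + \<eta>"
  define g where "g = (\<lambda>\<sigma>. G0 * exp ((K + 1) * \<sigma>))"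
  have G0: "P + \<eta> \<le> G0" "h 0 < G0" using P \<eta> by (auto simp: G0_def)
  have g_ge: "G0 \<le> g \<sigma>" if "0 \<le> \<sigma>" for \<sigma> using G0 K P \<eta> that by (simp add: g_def)
  have "h s \<le> g s"
  proof (rule real_induction_Icc[OF _ _ s])
    fix \<sigma> assume \<sigma>: "\<sigma> \<in> {0..\<tau>}" and below: "\<And>r. r \<in> {0..<\<sigma>} \<Longrightarrow> h r \<le> g r"
    show "h \<sigma> \<le> g \<sigma>"
    proof (cases "\<sigma> = 0")
      case True then show ?thesis using G0 g_ge[of 0] by simp
    next
      case False
      then have cl: "closure {0..<\<sigma>} = {0..\<sigma>}" using \<sigma> by simp
      have "continuous_on (closure {0..<\<sigma>}) (\<lambda>r. h r - g r)"
        unfolding cl g_def by (intro continuous_intros continuous_on_subset[OF cont]) (use \<sigma> in auto)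
      then have "(\<lambda>r. h r - g r) ` closure {0..<\<sigma>} \<subseteq> {..0}"
        by (rule image_closure_subset) (use below in auto)
      then show ?thesis using cl \<sigma> unfolding image_subset_iff by fastforce
    qed
  next
    fix \<sigma> assume \<sigma>: "\<sigma> \<in> {0..<\<tau>}" and upto: "\<And>r. r \<in> {0..\<sigma>} \<Longrightarrow> h r \<le> g r"
    have h\<sigma>: "h \<sigma> \<le> g \<sigma>" and g\<sigma>: "G0 \<le> g \<sigma>" using upto[of \<sigma>] g_ge[of \<sigma>] \<sigma> by auto
    obtain \<delta> where "\<delta> > 0" and step: "\<And>r. \<sigma> < r \<Longrightarrow> r \<le> \<tau> \<Longrightarrow> r - \<sigma> < \<delta> \<Longrightarrow>
        h r \<le> h \<sigma> + (r - \<sigma>) * (P + K * max (h \<sigma>) 0 + \<eta>)"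
      using dini[OF \<sigma> \<eta>] by auto
    have "h r \<le> g r" if r: "\<sigma> < r" "r \<le> \<tau>" "r - \<sigma> < \<delta>" for r
    proof -
      have "K * max (h \<sigma>) 0 \<le> K * g \<sigma>" using h\<sigma> g\<sigma> G0 K P \<eta> by (intro mult_left_mono) auto
      then have "h r \<le> g \<sigma> + (r - \<sigma>) * ((K + 1) * g \<sigma>)"
        using step[OF r] h\<sigma> g\<sigma> G0 r(1) mult_left_mono[of "P + K * max (h \<sigma>) 0 + \<eta>" "(K + 1) * g \<sigma>" "r - \<sigma>"]
        by (simp add: algebra_simps)
      also have "\<dots> = g \<sigma> * (1 + (K + 1) * (r - \<sigma>))" by (simp add: algebra_simps)
      also have "\<dots> \<le> g \<sigma> * exp ((K + 1) * (r - \<sigma>))"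
        using g\<sigma> G0 P \<eta> by (intro mult_left_mono exp_ge_add_one_self) auto
      also have "\<dots> = g r" by (simp add: g_def mult.assoc exp_add[symmetric] algebra_simps)
      finally show ?thesis .
    qed
    then show "\<exists>\<delta>>0. \<forall>r. \<sigma> < r \<and> r \<le> \<tau> \<and> r - \<sigma> < \<delta> \<longrightarrow> h r \<le> g r" using \<open>\<delta> > 0\<close> by blast
  qed
  then show ?thesis by (simp add: g_def G0_def)
qed

lemma gronwall_dini_zero:
  fixes h :: "real \<Rightarrow> real"
  assumes cont: "continuous_on {0..\<tau>} h" and K: "0 \<le> K" and h0: "h 0 \<le> 0"
    and dini: "\<And>\<sigma> \<epsilon>. \<sigma> \<in> {0..<\<tau>} \<Longrightarrow> \<epsilon> > 0 \<Longrightarrow> \<exists>\<delta>>0. \<forall>r. \<sigma> < r \<and> r \<le> \<tau> \<and> r - \<sigma> < \<delta> \<longrightarrow>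
               h r \<le> h \<sigma> + (r - \<sigma>) * (K * max (h \<sigma>) 0 + \<epsilon>)"
    and s: "s \<in> {0..\<tau>}"
  shows "h s \<le> 0"
proof (rule ccontr)
  assume pos: "\<not> h s \<le> 0"
  define \<eta> where "\<eta> = h s / (2 * exp ((K + 1) * s))"
  have \<eta>: "\<eta> > 0" using pos by (simp add: \<eta>_def)
  have "h s \<le> (max (h 0) 0 + 0 + \<eta>) * exp ((K + 1) * s)"
    by (rule gronwall_dini[OF cont K order_refl \<eta> _ s]) (use dini in simp)
  also have "\<dots> = h s / 2" using h0 by (simp add: \<eta>_def)
  finally show False using pos by simp
qed

lemma dini_real:
  fixes \<phi> :: "real \<Rightarrow> real"
  assumes der: "(\<phi> has_vector_derivative D) (at \<sigma> within S)" and B: "D \<le> B" and \<epsilon>: "\<epsilon> > 0"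
  shows "\<exists>\<delta>>0. \<forall>r\<in>S. \<sigma> < r \<and> r - \<sigma> < \<delta> \<longrightarrow> \<phi> r \<le> \<phi> \<sigma> + (r - \<sigma>) * (B + \<epsilon>)"
proof -
  obtain \<delta> where \<delta>: "\<delta> > 0" and near: "\<And>y. y \<in> S \<Longrightarrow> norm (y - \<sigma>) < \<delta> \<Longrightarrow>
      norm (\<phi> y - \<phi> \<sigma> - (y - \<sigma>) *\<^sub>R D) \<le> \<epsilon> * norm (y - \<sigma>)"
    using der \<epsilon> unfolding has_vector_derivative_def has_derivative_within_alt by blast
  have "\<phi> r \<le> \<phi> \<sigma> + (r - \<sigma>) * (B + \<epsilon>)" if r: "r \<in> S" "\<sigma> < r" "r - \<sigma> < \<delta>" for r
  proof -
    have "\<phi> r - \<phi> \<sigma> - (r - \<sigma>) * D \<le> \<epsilon> * (r - \<sigma>)" using near[OF r(1)] r by auto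
    moreover have "(r - \<sigma>) * D \<le> (r - \<sigma>) * B" using B r by (intro mult_left_mono) auto
    ultimately show ?thesis by (simp add: algebra_simps)
  qed
  then show ?thesis using \<delta> by blast
qed

text \<open>The same for the squared distance to a moving point \<open>d(r) - d(\<sigma>) + q\<close>, whose derivative at
  \<open>\<sigma>\<close> is \<open>2\<langle>q, d'(\<sigma>)\<rangle>\<close>.\<close>
lemma dini_norm_square:
  fixes d :: "real \<Rightarrow> 'a::real_inner"
  assumes der: "(d has_vector_derivative D) (at \<sigma> within S)" and \<epsilon>: "\<epsilon> > 0"
    and B: "inner q D \<le> B"
  shows "\<exists>\<delta>>0. \<forall>r\<in>S. \<sigma> < r \<and> r - \<sigma> < \<delta> \<longrightarrow>
           (norm (d r - d \<sigma> + q))\<^sup>2 \<le> (norm q)\<^sup>2 + (r - \<sigma>) * (2 * B + \<epsilon>)"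
proof -
  have "((\<lambda>r. d r - d \<sigma> + q) has_vector_derivative D - 0 + 0) (at \<sigma> within S)"
    by (intro has_vector_derivative_add has_vector_derivative_diff der has_vector_derivative_const)
  then have e: "((\<lambda>r. d r - d \<sigma> + q) has_vector_derivative D) (at \<sigma> within S)" by simp
  have "((\<lambda>r. inner (d r - d \<sigma> + q) (d r - d \<sigma> + q)) has_vector_derivative
      (inner (d \<sigma> - d \<sigma> + q) D + inner D (d \<sigma> - d \<sigma> + q))) (at \<sigma> within S)"
    by (rule bounded_bilinear.has_vector_derivative[OF bounded_bilinear_inner e e])
  then have "((\<lambda>r. (norm (d r - d \<sigma> + q))\<^sup>2) has_vector_derivative 2 * inner q D) (at \<sigma> within S)"
    by (simp add: power2_norm_eq_inner inner_commute)
  from dini_real[OF this _ \<epsilon>, of "2 * B"] B show ?thesis by simp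
qed

section \<open>Global existence for globally Lipschitz right-hand sides (Picard iteration)\<close>

lemma integral_power_Icc0:
  assumes "0 \<le> (\<sigma>::real)"
  shows "integral {0..\<sigma>} (\<lambda>r. r ^ k) = \<sigma> ^ Suc k / Suc k"
proof -
  have "((\<lambda>r. r ^ k) has_integral (\<sigma> ^ Suc k / Suc k - 0 ^ Suc k / Suc k)) {0..\<sigma>}"
  proof (rule fundamental_theorem_of_calculus[OF assms])
    fix x :: real assume "x \<in> {0..\<sigma>}"
    have "((\<lambda>r. r ^ Suc k / Suc k) has_real_derivative (real (Suc k) * x ^ k / Suc k)) (at x within {0..\<sigma>})"
      by (intro derivative_eq_intros) auto
    then show "((\<lambda>r. r ^ Suc k / Suc k) has_vector_derivative x ^ k) (at x within {0..\<sigma>})"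
      by (simp add: has_real_derivative_iff_has_vector_derivative del: of_nat_Suc)
  qed
  then show ?thesis by (simp add: integral_unique)
qed

lemma continuous_on_integral_upto:
  fixes g :: "real \<Rightarrow> 'a::banach"
  assumes "continuous_on {a..b} g"
  shows "continuous_on {a..b} (\<lambda>\<sigma>. integral {a..\<sigma>} g)"
  by (rule continuous_on_vector_derivative) (rule integral_has_vector_derivative[OF assms], simp)

primrec picard_iter :: "(real \<Rightarrow> 'a \<Rightarrow> 'a) \<Rightarrow> 'a::banach \<Rightarrow> nat \<Rightarrow> real \<Rightarrow> 'a" where
  "picard_iter F z 0 = (\<lambda>\<sigma>. z)"
| "picard_iter F z (Suc n) = (\<lambda>\<sigma>. z + integral {0..\<sigma>} (\<lambda>r. F r (picard_iter F z n r)))"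

declare picard_iter.simps(2) [simp del]

locale picard_setting =
  fixes F :: "real \<Rightarrow> 'a::banach \<Rightarrow> 'a" and s0 L M :: real
  assumes s0: "0 \<le> s0" and L: "0 \<le> L"
    and cont: "\<And>u. continuous_on {0..s0} u \<Longrightarrow> continuous_on {0..s0} (\<lambda>r. F r (u r))"
    and lip: "\<And>\<sigma> v w. \<sigma> \<in> {0..s0} \<Longrightarrow> norm (F \<sigma> v - F \<sigma> w) \<le> L * norm (v - w)"
    and bnd: "\<And>\<sigma> v. \<sigma> \<in> {0..s0} \<Longrightarrow> norm (F \<sigma> v) \<le> M"
begin

lemma M_nonneg: "0 \<le> M"
  using bnd[of 0 0] s0 by (auto intro: order_trans[OF norm_ge_zero])

lemma picard_iter_continuous: "continuous_on {0..s0} (picard_iter F z n)"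
  by (induction n) (simp_all add: picard_iter.simps continuous_intros continuous_on_integral_upto cont)

lemma picard_iter_integrable:
  "\<sigma> \<in> {0..s0} \<Longrightarrow> (\<lambda>r. F r (picard_iter F z n r)) integrable_on {0..\<sigma>}"
  by (rule integrable_continuous_real, rule continuous_on_subset[OF cont[OF picard_iter_continuous]]) auto

lemma picard_iter_step_bound:
  assumes "\<sigma> \<in> {0..s0}"
  shows "norm (picard_iter F z (Suc n) \<sigma> - picard_iter F z n \<sigma>) \<le> M * L ^ n * \<sigma> ^ Suc n / fact (Suc n)"
  using assms
proof (induction n arbitrary: \<sigma>)
  case 0
  have "norm (integral {0..\<sigma>} (\<lambda>r. F r z)) \<le> integral {0..\<sigma>} (\<lambda>r. M)"
    by (rule integral_norm_bound_integral) (use picard_iter_integrable[OF 0, of z 0] 0 in \<open>auto intro: bnd\<close>)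
  then show ?case using 0 by (simp add: picard_iter.simps mult.commute)
next
  case (Suc n)
  let ?u = "picard_iter F z"
  have "?u (Suc (Suc n)) \<sigma> - ?u (Suc n) \<sigma>
      = integral {0..\<sigma>} (\<lambda>r. F r (?u (Suc n) r)) - integral {0..\<sigma>} (\<lambda>r. F r (?u n r))"
    by (simp only: picard_iter.simps(2)) simp
  also have "\<dots> = integral {0..\<sigma>} (\<lambda>r. F r (?u (Suc n) r) - F r (?u n r))"
    by (intro integral_diff[symmetric] picard_iter_integrable Suc.prems)
  finally have diff: "?u (Suc (Suc n)) \<sigma> - ?u (Suc n) \<sigma> = \<dots>" .
  have "norm (integral {0..\<sigma>} (\<lambda>r. F r (?u (Suc n) r) - F r (?u n r)))
      \<le> integral {0..\<sigma>} (\<lambda>r. (L * (M * L ^ n / fact (Suc n))) * r ^ Suc n)"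
  proof (rule integral_norm_bound_integral)
    show "(\<lambda>r. F r (?u (Suc n) r) - F r (?u n r)) integrable_on {0..\<sigma>}"
      using picard_iter_integrable Suc.prems by (intro integrable_diff) auto
    show "(\<lambda>r. (L * (M * L ^ n / fact (Suc n))) * r ^ Suc n) integrable_on {0..\<sigma>}"
      by (intro integrable_continuous_real continuous_intros)
    fix r assume "r \<in> {0..\<sigma>}"
    then have r: "r \<in> {0..s0}" using Suc.prems by auto
    have "norm (F r (?u (Suc n) r) - F r (?u n r)) \<le> L * norm (?u (Suc n) r - ?u n r)"
      by (rule lip[OF r])
    also have "\<dots> \<le> L * (M * L ^ n * r ^ Suc n / fact (Suc n))"
      by (rule mult_left_mono[OF Suc.IH[OF r] L])
    finally show "norm (F r (?u (Suc n) r) - F r (?u n r)) \<le> (L * (M * L ^ n / fact (Suc n))) * r ^ Suc n"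
      by (simp add: field_simps)
  qed
  also have "\<dots> = (L * (M * L ^ n / fact (Suc n))) * (\<sigma> ^ Suc (Suc n) / Suc (Suc n))"
    using Suc.prems by (simp add: integral_power_Icc0 del: of_nat_Suc power_Suc)
  also have "\<dots> = M * L ^ Suc n * \<sigma> ^ Suc (Suc n) / fact (Suc (Suc n))"
    by (simp add: field_simps del: of_nat_Suc power_Suc) (simp add: algebra_simps)
  finally show ?case using diff by simp
qed

text \<open>Hence the iterates converge uniformly (Weierstrass M-test against the exponential series).\<close>
lemma picard_iter_uniform_limit:
  "\<exists>u. uniform_limit {0..s0} (picard_iter F z) u sequentially"
proof -
  define d where "d = (\<lambda>i \<sigma>. picard_iter F z (Suc i) \<sigma> - picard_iter F z i \<sigma>)"
  define Mi where "Mi = (\<lambda>i. (M * s0) * (inverse (fact i) * (L * s0) ^ i))"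
  have dM: "norm (d i \<sigma>) \<le> Mi i" if "\<sigma> \<in> {0..s0}" for i \<sigma>
  proof -
    have "M * L ^ i * \<sigma> ^ Suc i / fact (Suc i) \<le> M * L ^ i * s0 ^ Suc i / fact (Suc i)"
      using that M_nonneg L by (intro divide_right_mono mult_left_mono power_mono) auto
    also have "\<dots> \<le> M * L ^ i * s0 ^ Suc i / fact i"
      using M_nonneg L s0 by (intro divide_left_mono fact_mono) auto
    also have "\<dots> = Mi i" by (simp add: Mi_def power_mult_distrib field_simps)
    finally show ?thesis using picard_iter_step_bound[OF that, of z i] by (simp add: d_def)
  qed
  have "summable Mi" unfolding Mi_def by (intro summable_mult summable_exp)
  from Weierstrass_m_test[OF dM this]
  have "uniform_limit {0..s0} (\<lambda>n \<sigma>. \<Sum>i<n. d i \<sigma>) (\<lambda>\<sigma>. \<Sum>i. d i \<sigma>) sequentially" .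
  then have "uniform_limit {0..s0} (\<lambda>n \<sigma>. z + (\<Sum>i<n. d i \<sigma>)) (\<lambda>\<sigma>. z + (\<Sum>i. d i \<sigma>)) sequentially"
    by (intro uniform_limit_intros)
  moreover have "(\<lambda>n \<sigma>. z + (\<Sum>i<n. d i \<sigma>)) = picard_iter F z"
  proof (intro ext)
    fix n \<sigma>
    have "(\<Sum>i<n. d i \<sigma>) = picard_iter F z n \<sigma> - picard_iter F z 0 \<sigma>"
      unfolding d_def by (rule sum_lessThan_telescope)
    then show "z + (\<Sum>i<n. d i \<sigma>) = picard_iter F z n \<sigma>" by simp
  qed
  ultimately show ?thesis by auto
qed

lemma rhs_uniform_limit:
  assumes ul: "uniform_limit {0..s0} g u sequentially" and sub: "S \<subseteq> {0..s0}"
  shows "uniform_limit S (\<lambda>n r. F r (g n r)) (\<lambda>r. F r (u r)) sequentially"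
proof (rule uniform_limitI)
  fix e :: real assume e: "e > 0"
  have "\<forall>\<^sub>F n in sequentially. \<forall>r\<in>{0..s0}. dist (g n r) (u r) < e / (L + 1)"
    using uniform_limitD[OF ul] e L by simp
  then show "\<forall>\<^sub>F n in sequentially. \<forall>r\<in>S. dist (F r (g n r)) (F r (u r)) < e"
  proof eventually_elim
    case (elim n)
    have "dist (F r (g n r)) (F r (u r)) < e" if "r \<in> S" for r
    proof -
      have r: "r \<in> {0..s0}" using that sub by auto
      have "dist (F r (g n r)) (F r (u r)) \<le> L * dist (g n r) (u r)"
        using lip[OF r] by (simp add: dist_norm)
      also have "\<dots> \<le> L * (e / (L + 1))" using elim r L by (intro mult_left_mono) (auto intro: less_imp_le)
      also have "\<dots> < e" using L e by (simp add: field_simps)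
      finally show ?thesis .
    qed
    then show ?case by blast
  qed
qed

lemma picard_limit_integral_equation:
  assumes ul: "uniform_limit {0..s0} (picard_iter F z) u sequentially" and \<sigma>: "\<sigma> \<in> {0..s0}"
  shows "u \<sigma> = z + integral {0..\<sigma>} (\<lambda>r. F r (u r))"
proof -
  have sub: "{0..\<sigma>} \<subseteq> {0..s0}" using \<sigma> by auto
  obtain I J where I: "\<And>n. ((\<lambda>r. F r (picard_iter F z n r)) has_integral I n) {0..\<sigma>}"
    and J: "((\<lambda>r. F r (u r)) has_integral J) {0..\<sigma>}" and IJ: "I \<longlonglongrightarrow> J"
    by (rule uniform_limit_integral[OF rhs_uniform_limit[OF ul sub]])
      (auto intro: continuous_on_subset[OF cont[OF picard_iter_continuous] sub])
  have "(\<lambda>n. picard_iter F z (Suc n) \<sigma>) = (\<lambda>n. z + I n)"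
    using integral_unique[OF I] by (simp add: picard_iter.simps)
  then have "(\<lambda>n. picard_iter F z (Suc n) \<sigma>) \<longlonglongrightarrow> z + J"
    using tendsto_add[OF tendsto_const IJ] by simp
  moreover have "(\<lambda>n. picard_iter F z (Suc n) \<sigma>) \<longlonglongrightarrow> u \<sigma>"
    using tendsto_uniform_limitI[OF ul \<sigma>] by (rule LIMSEQ_Suc)
  ultimately have "u \<sigma> = z + J" using LIMSEQ_unique by blast
  then show ?thesis using J by (simp add: integral_unique)
qed

theorem picard_existence:
  "\<exists>u. u 0 = z \<and> continuous_on {0..s0} u \<and>
     (\<forall>\<sigma>\<in>{0..s0}. (u has_vector_derivative F \<sigma> (u \<sigma>)) (at \<sigma> within {0..s0}))"
proof -
  obtain u where ul: "uniform_limit {0..s0} (picard_iter F z) u sequentially"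
    using picard_iter_uniform_limit by blast
  have uc: "continuous_on {0..s0} u"
    by (rule uniform_limit_theorem[OF _ ul]) (auto simp: picard_iter_continuous)
  note eq = picard_limit_integral_equation[OF ul]
  have "(u has_vector_derivative F \<sigma> (u \<sigma>)) (at \<sigma> within {0..s0})" if \<sigma>: "\<sigma> \<in> {0..s0}" for \<sigma>
  proof -
    have "((\<lambda>\<sigma>. z + integral {0..\<sigma>} (\<lambda>r. F r (u r))) has_vector_derivative (0 + F \<sigma> (u \<sigma>)))
        (at \<sigma> within {0..s0})"
      by (intro derivative_intros integral_has_vector_derivative cont uc \<sigma>)
    then show ?thesis using has_vector_derivative_transform[OF \<sigma>, of u] eq by simp
  qed
  moreover have "u 0 = z" using eq[of 0] s0 by simp
  ultimately show ?thesis using uc by blast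
qed

end

section \<open>Proper cones and their order\<close>

lemma pc_zero: "proper_cone C \<Longrightarrow> 0 \<in> C"
  unfolding proper_cone_def by auto

lemma pc_add: "proper_cone C \<Longrightarrow> x \<in> C \<Longrightarrow> y \<in> C \<Longrightarrow> x + y \<in> C"
  unfolding proper_cone_def by auto

lemma pc_scale: "proper_cone C \<Longrightarrow> 0 \<le> c \<Longrightarrow> x \<in> C \<Longrightarrow> c *\<^sub>R x \<in> C"
  unfolding proper_cone_def is_cone_def by (cases "c = 0") auto

lemma pc_pointed:
  assumes "proper_cone C" and "x \<in> C" and "- x \<in> C"
  shows "x = 0"
proof -
  have "x \<in> uminus ` C" using assms(3) by (metis image_eqI minus_minus)
  then show "x = 0" using assms(1,2) unfolding proper_cone_def by auto
qed

lemma pc_convex: "proper_cone C \<Longrightarrow> convex C"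
  unfolding convex_def by (auto intro: pc_add pc_scale)

lemma cone_le_refl: "proper_cone C \<Longrightarrow> cone_le C x x"
  by (simp add: cone_le_def pc_zero)

lemma cone_le_antisym: "proper_cone C \<Longrightarrow> cone_le C x y \<Longrightarrow> cone_le C y x \<Longrightarrow> x = y"
  unfolding cone_le_def using pc_pointed[of C "y - x"] by (simp add: algebra_simps)

lemma dual_cone_mono: "l \<in> dual_cone C \<Longrightarrow> cone_le C x y \<Longrightarrow> l x \<le> l y"
  unfolding dual_cone_def cone_le_def by (auto simp: linear_diff)

lemma inner_dual_cone: "(\<And>c. c \<in> C \<Longrightarrow> 0 \<le> inner a c) \<Longrightarrow> (\<lambda>v. inner a v) \<in> dual_cone C"
  unfolding dual_cone_def by (auto intro: bounded_linear.linear bounded_linear_inner_right)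

lemma dual_cone_convex_on:
  assumes l: "l \<in> dual_cone C" and g: "convex_map C D g"
  shows "convex_on D (\<lambda>v. l (g v))"
proof (rule convex_onI)
  show "convex D" using g by (simp add: convex_map_def)
  fix t :: real and x y assume t: "0 < t" "t < 1" and xy: "x \<in> D" "y \<in> D"
  have "\<forall>c. 0 \<le> c \<and> c \<le> 1 \<longrightarrow>
      cone_le C (g (c *\<^sub>R x + (1 - c) *\<^sub>R y)) (c *\<^sub>R g x + (1 - c) *\<^sub>R g y)"
    using g xy unfolding convex_map_def by blast
  from this[rule_format, of "1 - t"] t
  have "cone_le C (g ((1 - t) *\<^sub>R x + t *\<^sub>R y)) ((1 - t) *\<^sub>R g x + t *\<^sub>R g y)" by simp
  then have "l (g ((1 - t) *\<^sub>R x + t *\<^sub>R y)) \<le> l ((1 - t) *\<^sub>R g x + t *\<^sub>R g y)"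
    by (rule dual_cone_mono[OF l])
  also have "\<dots> = (1 - t) * l (g x) + t * l (g y)"
    using l unfolding dual_cone_def by (simp add: linear_add linear_scale)
  finally show "l (g ((1 - t) *\<^sub>R x + t *\<^sub>R y)) \<le> (1 - t) * l (g x) + t * l (g y)" .
qed

lemma convex_map_subset:
  "convex_map C U g \<Longrightarrow> D \<subseteq> U \<Longrightarrow> convex D \<Longrightarrow> convex_map C D g"
  unfolding convex_map_def by blast

lemma pc_hull_nonzero:
  assumes p: "proper_cone C" and "finite F" and "F \<subseteq> C \<inter> sphere 0 1" and "x \<in> convex hull F"
  shows "x \<in> C \<and> x \<noteq> 0"
  using assms(2-)
proof (induction F arbitrary: x rule: finite_induct)
  case empty then show ?case by simp
next
  case (insert a F)
  have aC: "a \<in> C" and an: "a \<noteq> 0" using insert.prems by auto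
  show ?case
  proof (cases "F = {}")
    case True then show ?thesis using insert.prems aC an by simp
  next
    case False
    obtain u v b where uv: "u \<ge> 0" "v \<ge> 0" "u + v = 1" and b: "b \<in> convex hull F"
      and x: "x = u *\<^sub>R a + v *\<^sub>R b"
      using insert.prems(2) convex_hull_insert[OF False] by auto
    have bC: "b \<in> C" and bn: "b \<noteq> 0" using insert.IH[OF _ b] insert.prems by auto
    have ua: "u *\<^sub>R a \<in> C" and vb: "v *\<^sub>R b \<in> C" using uv aC bC pc_scale[OF p] by auto
    have "x \<noteq> 0"
    proof
      assume "x = 0"
      then have "- (u *\<^sub>R a) = v *\<^sub>R b" using x by (metis add.commute add_eq_0_iff)
      then have "u *\<^sub>R a = 0" using pc_pointed[OF p ua] vb by simp
      then show False using an uv bn \<open>x = 0\<close> x by simp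
    qed
    then show ?thesis using x pc_add[OF p ua vb] by simp
  qed
qed

text \<open>This is what makes order-bounded
  sets norm-bounded.\<close>
lemma pc_dual_interior:
  fixes C :: "'a::euclidean_space set"
  assumes cl: "closed C" and p: "proper_cone C"
  obtains a \<beta> where "\<beta> > 0" "\<And>c. c \<in> C \<Longrightarrow> \<beta> * norm c \<le> inner a c"
proof -
  define S where "S = C \<inter> sphere 0 1"
  have cK: "compact (convex hull S)"
    unfolding S_def by (intro compact_convex_hull closed_Int_compact cl compact_sphere)
  have "0 \<notin> convex hull S"
  proof
    assume "0 \<in> convex hull S"
    then obtain F where "finite F" "F \<subseteq> S" "0 \<in> convex hull F"
      using caratheodory[of S] by auto
    then show False using pc_hull_nonzero[OF p] by (auto simp: S_def)
  qed
  then obtain a b where ab: "inner a 0 < b" "\<forall>x\<in>convex hull S. inner a x > b"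
    using separating_hyperplane_closed_point[OF convex_convex_hull compact_imp_closed[OF cK]] by blast
  have "b * norm c \<le> inner a c" if c: "c \<in> C" for c
  proof (cases "c = 0")
    case False
    have "(1 / norm c) *\<^sub>R c \<in> S" using c False pc_scale[OF p, of "1/norm c" c] by (simp add: S_def)
    then have "(1 / norm c) *\<^sub>R c \<in> convex hull S" by (rule hull_inc)
    then have "inner a ((1 / norm c) *\<^sub>R c) > b" using ab(2) by blast
    then show ?thesis using False by (simp add: field_simps)
  qed simp
  moreover have "b > 0" using ab by simp
  ultimately show ?thesis using that by blast
qed

lemma cone_projection:
  fixes C :: "'a::euclidean_space set"
  assumes cl: "closed C" and p: "proper_cone C"
  shows "closest_point C d \<in> C"
    and "\<And>c. c \<in> C \<Longrightarrow> inner (d - closest_point C d) c \<le> 0"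
    and "inner (d - closest_point C d) (closest_point C d) = 0"
proof -
  let ?p = "closest_point C d"
  have cC: "convex C" by (rule pc_convex[OF p])
  have "C \<noteq> {}" using pc_zero[OF p] by auto
  then show pC: "?p \<in> C" by (rule closest_point_in_set[OF cl])
  have dot: "inner (d - ?p) (x - ?p) \<le> 0" if "x \<in> C" for x
    by (rule closest_point_dot[OF cC cl that])
  show "inner (d - ?p) c \<le> 0" if "c \<in> C" for c
    using dot[OF pc_add[OF p pC that]] by simp
  have "inner (d - ?p) ((?p + ?p) - ?p) \<le> 0" by (rule dot[OF pc_add[OF p pC pC]])
  moreover have "inner (d - ?p) (0 - ?p) \<le> 0" by (rule dot[OF pc_zero[OF p]])
  ultimately show "inner (d - ?p) ?p = 0" by (simp add: inner_diff_right)
qed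

section \<open>Bounded convex functions\<close>

lemma convex_lip_bound:
  fixes g :: "'a::real_normed_vector \<Rightarrow> real"
  assumes r: "r > 0" and conv: "convex_on (cball x0 (2 * r)) g"
    and bnd: "\<And>v. v \<in> cball x0 (2 * r) \<Longrightarrow> \<bar>g v\<bar> \<le> M"
    and a: "a \<in> cball x0 r" and b: "b \<in> cball x0 r"
  shows "g b - g a \<le> (2 * M / r) * norm (b - a)"
proof (cases "a = b")
  case True
  then show ?thesis using bnd[of a] a r by (auto intro: order_trans[OF abs_ge_zero])
next
  case False
  define D where "D = norm (b - a)"
  define q where "q = b + (r / D) *\<^sub>R (b - a)"
  define c where "c = D / (D + r)"
  have D: "D > 0" using False by (simp add: D_def)
  have c: "0 \<le> c" "c \<le> 1" using D r by (auto simp: c_def)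
  have a2: "a \<in> cball x0 (2 * r)" using a r by auto
  have "dist x0 q \<le> dist x0 b + norm ((r / D) *\<^sub>R (b - a))"
    using norm_triangle_ineq4[of "x0 - b" "(r / D) *\<^sub>R (b - a)"] by (simp add: q_def dist_norm algebra_simps)
  also have "norm ((r / D) *\<^sub>R (b - a)) = r" using D r by (simp add: D_def)
  finally have q2: "q \<in> cball x0 (2 * r)" using b by simp
  have "(1 - (1 - c)) *\<^sub>R q + (1 - c) *\<^sub>R a = b"
  proof -
    have "c * (r / D) = 1 - c" using D r by (simp add: c_def field_simps)
    then have "c *\<^sub>R q + (1 - c) *\<^sub>R a = c *\<^sub>R b + (1 - c) *\<^sub>R (b - a) + (1 - c) *\<^sub>R a"
      by (simp add: q_def scaleR_add_right)
    then show ?thesis by (simp add: algebra_simps)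
  qed
  then have "g b \<le> c * g q + (1 - c) * g a" using convex_onD[OF conv, of "1 - c" q a] q2 a2 c by simp
  then have "g b - g a \<le> c * (g q - g a)" by (simp add: algebra_simps)
  also have "\<dots> \<le> c * (2 * M)" using bnd[OF q2] bnd[OF a2] c by (intro mult_left_mono) auto
  also have "\<dots> \<le> (D / r) * (2 * M)"
    using D r bnd[OF a2] by (intro mult_right_mono) (auto simp: c_def field_simps)
  finally show ?thesis by (simp add: D_def field_simps)
qed

text \<open>A convex function bounded by \<open>M\<close> on a ball \<open>cball z r\<close> has an affine lower bound on
  its whole (convex) domain, obtained by reflecting through \<open>z\<close>.\<close>
lemma convex_affine_lower_bound:
  fixes g :: "'a::real_normed_vector \<Rightarrow> real"
  assumes conv: "convex_on U g" and r: "r > 0" and ball: "cball z r \<subseteq> U"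
    and bnd: "\<And>v. v \<in> cball z r \<Longrightarrow> \<bar>g v\<bar> \<le> M" and v: "v \<in> U"
  shows "- 2 * M - (2 * M / r) * norm (v - z) \<le> g v"
proof (cases "v = z")
  case True
  then show ?thesis using bnd[of z] r by (auto intro: order_trans[OF abs_ge_zero])
next
  case False
  define D where "D = norm (v - z)"
  define q where "q = z - (r / D) *\<^sub>R (v - z)"
  define \<alpha> where "\<alpha> = r / (r + D)"
  have D: "D > 0" using False by (simp add: D_def)
  have q: "q \<in> cball z r" using D r by (simp add: q_def dist_norm D_def)
  have \<alpha>: "0 < \<alpha>" "\<alpha> \<le> 1" using r D by (auto simp: \<alpha>_def)
  have M: "0 \<le> M" using bnd[of z] r by (auto intro: order_trans[OF abs_ge_zero])
  have "(1 - \<alpha>) * (r / D) = \<alpha>" using r D by (simp add: \<alpha>_def field_simps)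
  then have "\<alpha> *\<^sub>R v + (1 - \<alpha>) *\<^sub>R q = \<alpha> *\<^sub>R v + (1 - \<alpha>) *\<^sub>R z - \<alpha> *\<^sub>R (v - z)"
    by (simp add: q_def scaleR_diff_right)
  then have "(1 - (1 - \<alpha>)) *\<^sub>R v + (1 - \<alpha>) *\<^sub>R q = z" by (simp add: algebra_simps)
  then have "g z \<le> \<alpha> * g v + (1 - \<alpha>) * g q"
    using convex_onD[OF conv, of "1 - \<alpha>" v q] v q ball \<alpha> by auto
  moreover have "- M \<le> g z" "(1 - \<alpha>) * g q \<le> (1 - \<alpha>) * M"
    using bnd[of z] bnd[OF q] r \<alpha> by (auto intro: mult_left_mono)
  moreover have "(1 - \<alpha>) * M \<le> M" using \<alpha> M by (simp add: mult_left_le_one_le)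
  ultimately have "- 2 * M / \<alpha> \<le> g v" using \<alpha> by (simp add: field_simps)
  moreover have "- 2 * M / \<alpha> = - 2 * M - (2 * M / r) * norm (v - z)"
    using r D by (simp add: \<alpha>_def D_def field_simps)
  ultimately show ?thesis by simp
qed

lemma positive_functional_dual:
  assumes \<beta>: "\<beta> > 0" and a: "\<And>c. c \<in> C \<Longrightarrow> \<beta> * norm c \<le> inner a c"
  shows "(\<lambda>v. inner a v) \<in> dual_cone C"
proof (rule inner_dual_cone)
  fix c assume "c \<in> C"
  moreover have "0 \<le> \<beta> * norm c" using \<beta> by simp
  ultimately show "0 \<le> inner a c" using a by (meson order_trans)
qed

lemma positive_functional_lipschitz:
  fixes g :: "'a::real_inner \<Rightarrow> 'a"
  assumes w: "\<And>c. c \<in> C \<Longrightarrow> 0 \<le> inner w c" and r: "r > 0"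
    and conv: "convex_map C (cball x0 (2 * r)) g"
    and bnd: "\<And>v. v \<in> cball x0 (2 * r) \<Longrightarrow> norm (g v) \<le> M"
    and pq: "p \<in> cball x0 r" "q \<in> cball x0 r"
  shows "\<bar>inner w (g q) - inner w (g p)\<bar> \<le> (2 * (norm w * M) / r) * norm (q - p)"
proof -
  have cv: "convex_on (cball x0 (2 * r)) (\<lambda>v. inner w (g v))"
    by (rule dual_cone_convex_on[OF inner_dual_cone[OF w] conv])
  have "\<bar>inner w (g v)\<bar> \<le> norm w * M" if "v \<in> cball x0 (2 * r)" for v
    using Cauchy_Schwarz_ineq2[of w "g v"] mult_left_mono[OF bnd[OF that] norm_ge_zero[of w]] by simp
  from convex_lip_bound[OF r cv this] pq show ?thesis
    by (fastforce simp: norm_minus_commute abs_le_iff)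
qed

text \<open>Cone-convex maps are locally Lipschitz: with a uniformly positive functional \<open>\<langle>a,\<cdot>\<rangle>\<close>,
  both \<open>\<langle>a,g\<rangle>\<close> and \<open>\<langle>a + \<beta> b, g\<rangle>\<close> (\<open>b\<close> a basis vector) are convex, and their difference
  controls the \<open>b\<close>-th coordinate of \<open>g\<close>.\<close>
lemma cone_convex_map_lipschitz:
  fixes g :: "'a::euclidean_space \<Rightarrow> 'a"
  assumes \<beta>: "\<beta> > 0" and a: "\<And>c. c \<in> C \<Longrightarrow> \<beta> * norm c \<le> inner a c" and r: "r > 0"
    and conv: "convex_map C (cball x0 (2 * r)) g"
    and bnd: "\<And>v. v \<in> cball x0 (2 * r) \<Longrightarrow> norm (g v) \<le> M"
  shows "(DIM('a) * (4 * (norm a + \<beta>) * M / (r * \<beta>)))-lipschitz_on (cball x0 r) g"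
proof -
  have M: "0 \<le> M" using bnd[of x0] r by (auto intro: order_trans[OF norm_ge_zero])
  define K where "K = 2 * ((norm a + \<beta>) * M) / r"
  have functional: "\<bar>inner w (g q) - inner w (g p)\<bar> \<le> K * norm (q - p)"
    if w: "\<And>c. c \<in> C \<Longrightarrow> 0 \<le> inner w c" "norm w \<le> norm a + \<beta>"
      and pq: "p \<in> cball x0 r" "q \<in> cball x0 r" for w p q
  proof -
    have "2 * (norm w * M) / r \<le> K" using w(2) M r by (simp add: K_def divide_right_mono mult_right_mono)
    then show ?thesis using positive_functional_lipschitz[OF w(1) r conv bnd pq]
      by (meson mult_right_mono norm_ge_zero order_trans)
  qed
  have coord: "\<bar>inner (g q - g p) b\<bar> \<le> (4 * (norm a + \<beta>) * M / (r * \<beta>)) * norm (q - p)"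
    if b: "b \<in> Basis" and pq: "p \<in> cball x0 r" "q \<in> cball x0 r" for b p q
  proof -
    have a_pos: "0 \<le> inner a c" if "c \<in> C" for c
      using positive_functional_dual[OF \<beta> a] that by (simp add: dual_cone_def)
    have "0 \<le> inner (a + \<beta> *\<^sub>R b) c" if "c \<in> C" for c
    proof -
      have "- norm c \<le> inner b c" using Basis_le_norm[OF b, of c] by (simp add: inner_commute abs_le_iff)
      then show ?thesis using a[OF that] \<beta> mult_left_mono[of "- norm c" "inner b c" \<beta>]
        by (simp add: inner_add_left)
    qed
    moreover have "norm (a + \<beta> *\<^sub>R b) \<le> norm a + \<beta>"
      using norm_triangle_ineq[of a "\<beta> *\<^sub>R b"] \<beta> b by simp
    ultimately have "\<bar>inner (a + \<beta> *\<^sub>R b) (g q) - inner (a + \<beta> *\<^sub>R b) (g p)\<bar> \<le> K * norm (q - p)"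
      using functional pq by blast
    moreover have "\<bar>inner a (g q) - inner a (g p)\<bar> \<le> K * norm (q - p)"
      using functional[OF a_pos _ pq] \<beta> by simp
    moreover have "\<beta> * inner (g q - g p) b = (inner (a + \<beta> *\<^sub>R b) (g q) - inner (a + \<beta> *\<^sub>R b) (g p))
        - (inner a (g q) - inner a (g p))"
      by (simp add: inner_add_left inner_diff_right inner_commute algebra_simps)
    ultimately have "\<beta> * \<bar>inner (g q - g p) b\<bar> \<le> 2 * (K * norm (q - p))"
      using \<beta> by (simp add: abs_mult)
    then show ?thesis using \<beta> r by (simp add: K_def field_simps)
  qed
  show ?thesis
  proof (rule lipschitz_onI)
    fix p q assume pq: "p \<in> cball x0 r" "q \<in> cball x0 r"
    have "norm (g q - g p) \<le> (\<Sum>b\<in>Basis. \<bar>inner (g q - g p) b\<bar>)" by (rule norm_le_l1)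
    also have "\<dots> \<le> (\<Sum>b\<in>(Basis::'a set). (4 * (norm a + \<beta>) * M / (r * \<beta>)) * norm (q - p))"
      by (intro sum_mono coord pq)
    finally show "dist (g p) (g q) \<le> DIM('a) * (4 * (norm a + \<beta>) * M / (r * \<beta>)) * dist p q"
      by (simp add: dist_norm norm_minus_commute)
  qed (use M \<beta> r in simp)
qed

section \<open>Order-bounded sets and trapping regions\<close>

lemma below_norm_bound:
  fixes a :: "'a::real_inner"
  assumes \<beta>: "\<beta> > 0" and a: "\<And>c. c \<in> C \<Longrightarrow> \<beta> * norm c \<le> inner a c" and le: "cone_le C u w"
  shows "norm u \<le> norm w + (norm a * norm w - inner a u) / \<beta>"
proof -
  have "\<beta> * norm (w - u) \<le> inner a (w - u)" using a le by (simp add: cone_le_def)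
  also have "\<dots> \<le> norm a * norm w - inner a u"
    using Cauchy_Schwarz_ineq2[of a w] by (simp add: inner_diff_right)
  finally have "norm (w - u) \<le> (norm a * norm w - inner a u) / \<beta>" using \<beta> by (simp add: field_simps)
  then show ?thesis using norm_triangle_ineq4[of w "w - u"] by simp
qed

lemma compact_below_curve:
  fixes w :: "real \<Rightarrow> 'a::euclidean_space"
  assumes cl: "closed C" and \<beta>: "\<beta> > 0" and a: "\<And>c. c \<in> C \<Longrightarrow> \<beta> * norm c \<le> inner a c"
    and wc: "continuous_on {0..s0} w"
  shows "compact {v. \<exists>\<sigma>\<in>{0..s0}. cone_le C v (w \<sigma>) \<and> - R \<le> inner a v}"
proof -
  define g where "g = (\<lambda>p. w (fst p) - snd p)"
  define S where "S = ({0..s0} \<times> C) \<inter> (\<lambda>p. inner a (g p)) -` {- R..}"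
  have eq: "{v. \<exists>\<sigma>\<in>{0..s0}. cone_le C v (w \<sigma>) \<and> - R \<le> inner a v} = g ` S"
  proof (intro equalityI subsetI)
    fix v assume "v \<in> {v. \<exists>\<sigma>\<in>{0..s0}. cone_le C v (w \<sigma>) \<and> - R \<le> inner a v}"
    then obtain \<sigma> where "\<sigma> \<in> {0..s0}" "w \<sigma> - v \<in> C" "- R \<le> inner a v" by (auto simp: cone_le_def)
    then have "(\<sigma>, w \<sigma> - v) \<in> S" by (simp add: S_def g_def)
    then show "v \<in> g ` S" by (rule rev_image_eqI) (simp add: g_def)
  next
    fix v assume "v \<in> g ` S"
    then obtain \<sigma> c where "\<sigma> \<in> {0..s0}" "c \<in> C" "- R \<le> inner a (w \<sigma> - c)" "v = w \<sigma> - c"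
      by (auto simp: S_def g_def)
    then show "v \<in> {v. \<exists>\<sigma>\<in>{0..s0}. cone_le C v (w \<sigma>) \<and> - R \<le> inner a v}"
      by (auto simp: cone_le_def intro!: bexI[of _ \<sigma>])
  qed
  have gc: "continuous_on ({0..s0} \<times> C) g"
    unfolding g_def by (intro continuous_intros continuous_on_compose2[OF wc]) auto
  obtain Wb where Wb: "\<And>\<sigma>. \<sigma> \<in> {0..s0} \<Longrightarrow> norm (w \<sigma>) \<le> Wb"
    using compact_imp_bounded[OF compact_continuous_image[OF wc compact_Icc]] bounded_iff by (metis imageI)
  have "S \<subseteq> {0..s0} \<times> cball 0 ((norm a * Wb + R) / \<beta>)"
  proof
    fix p assume "p \<in> S"
    then obtain \<sigma> c where p: "p = (\<sigma>, c)" "\<sigma> \<in> {0..s0}" "c \<in> C" "- R \<le> inner a (w \<sigma> - c)"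
      by (auto simp: S_def g_def)
    have "\<beta> * norm c \<le> inner a (w \<sigma>) - inner a (w \<sigma> - c)" using a[OF p(3)] by (simp add: inner_diff_right)
    also have "\<dots> \<le> norm a * Wb + R"
      using Cauchy_Schwarz_ineq2[of a "w \<sigma>"] mult_left_mono[OF Wb[OF p(2)], of "norm a"] p(4) by simp
    finally show "p \<in> {0..s0} \<times> cball 0 ((norm a * Wb + R) / \<beta>)" using p \<beta> by (simp add: field_simps)
  qed
  then have "bounded S" by (rule bounded_subset[OF bounded_Times[OF bounded_closed_interval bounded_cball]])
  moreover have "closed S" unfolding S_def
    by (intro continuous_closed_preimage continuous_intros gc closed_Times cl)
  ultimately have "compact S" by (simp add: compact_eq_bounded_closed)
  moreover have "continuous_on S g" using gc by (rule continuous_on_subset) (auto simp: S_def)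
  ultimately show ?thesis unfolding eq by (intro compact_continuous_image)
qed

lemma compact_convex_neighbourhood:
  fixes K :: "'a::euclidean_space set"
  assumes K: "compact K" "K \<subseteq> U" and U: "open U" "convex U"
  obtains K2 \<delta> where "compact K2" "convex K2" "K2 \<subseteq> U" "\<delta> > 0" "\<And>v. v \<in> K \<Longrightarrow> cball v \<delta> \<subseteq> K2"
proof -
  define K1 where "K1 = convex hull K"
  have K1: "compact K1" "K1 \<subseteq> U" "K \<subseteq> K1"
    unfolding K1_def
    by (rule compact_convex_hull[OF K(1)], rule hull_minimal[where S=convex, OF K(2) U(2)], rule hull_subset)
  obtain \<delta> where \<delta>: "\<delta> > 0" and \<delta>U: "(\<Union>x\<in>K1. cball x \<delta>) \<subseteq> U"
    using compact_subset_open_imp_cball_epsilon_subset[OF K1(1) U(1) K1(2)] by blast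
  define K2 where "K2 = (\<Union>p\<in>K1. \<Union>q\<in>cball 0 \<delta>. {p + q})"
  have K2_iff: "v \<in> K2 \<longleftrightarrow> (\<exists>p\<in>K1. v \<in> cball p \<delta>)" for v
  proof
    assume "v \<in> K2"
    then obtain p q where "p \<in> K1" "q \<in> cball 0 \<delta>" "v = p + q" by (auto simp: K2_def)
    then show "\<exists>p\<in>K1. v \<in> cball p \<delta>" by (intro bexI[of _ p]) (auto simp: dist_norm)
  next
    assume "\<exists>p\<in>K1. v \<in> cball p \<delta>"
    then obtain p where "p \<in> K1" "v - p \<in> cball 0 \<delta>" by (auto simp: dist_norm norm_minus_commute)
    then show "v \<in> K2" unfolding K2_def by (intro UN_I[of p] UN_I[of "v - p"]) auto
  qed
  have "K2 \<subseteq> U" using K2_iff \<delta>U by blast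
  moreover have "cball v \<delta> \<subseteq> K2" if "v \<in> K" for v using K2_iff K1(3) that by blast
  moreover have "compact K2" unfolding K2_def by (rule compact_sums'[OF K1(1) compact_cball])
  moreover have "convex K2" unfolding K2_def K1_def by (rule convex_sums[OF convex_convex_hull convex_cball])
  ultimately show ?thesis using that \<delta> by blast
qed

lemma trapped_curve:
  fixes u :: "real \<Rightarrow> 'a::metric_space"
  assumes uc: "continuous_on {0..s0} u" and K: "closed K" "u 0 \<in> K" and \<delta>: "\<delta> > 0"
    and nbhd: "\<And>v. v \<in> K \<Longrightarrow> cball v \<delta> \<subseteq> K2"
    and step: "\<And>\<tau>. \<tau> \<in> {0..s0} \<Longrightarrow> (\<And>\<sigma>. \<sigma> \<in> {0..\<tau>} \<Longrightarrow> u \<sigma> \<in> K2) \<Longrightarrow> u \<tau> \<in> K"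
    and s: "s \<in> {0..s0}"
  shows "u s \<in> K"
proof (rule real_induction_Icc[OF _ _ s])
  fix \<sigma> assume \<sigma>: "\<sigma> \<in> {0..s0}" and before: "\<And>r. r \<in> {0..<\<sigma>} \<Longrightarrow> u r \<in> K"
  show "u \<sigma> \<in> K"
  proof (cases "\<sigma> = 0")
    case False
    then have cl: "closure {0..<\<sigma>} = {0..\<sigma>}" using \<sigma> by simp
    have "u ` closure {0..<\<sigma>} \<subseteq> K"
      by (rule image_closure_subset) (use before K \<sigma> in \<open>auto simp: cl intro: continuous_on_subset[OF uc]\<close>)
    then show ?thesis using cl \<sigma> by auto
  qed (use K in simp)
next
  fix \<sigma> assume \<sigma>: "\<sigma> \<in> {0..<s0}" and upto: "\<And>r. r \<in> {0..\<sigma>} \<Longrightarrow> u r \<in> K"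
  have "\<sigma> \<in> {0..s0}" using \<sigma> by auto
  from uc[unfolded continuous_on_iff, rule_format, OF this \<delta>]
  obtain e where e: "e > 0" and near: "\<And>r. r \<in> {0..s0} \<Longrightarrow> dist r \<sigma> < e \<Longrightarrow> dist (u r) (u \<sigma>) < \<delta>"
    by blast
  have "u r \<in> K" if r: "\<sigma> < r" "r \<le> s0" "r - \<sigma> < e" for r
  proof (rule step)
    show "r \<in> {0..s0}" using r \<sigma> by auto
    fix \<rho> assume \<rho>: "\<rho> \<in> {0..r}"
    show "u \<rho> \<in> K2"
    proof (cases "\<rho> \<le> \<sigma>")
      case True
      then have "u \<rho> \<in> K" using upto \<rho> by simp
      then show ?thesis using nbhd \<delta> by (meson centre_in_cball less_imp_le subsetD)
    next
      case False
      then have "dist (u \<rho>) (u \<sigma>) < \<delta>" using near[of \<rho>] \<rho> r by (simp add: dist_real_def)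
      then show ?thesis using nbhd[OF upto[of \<sigma>]] \<sigma> by (auto simp: dist_commute)
    qed
  qed
  then show "\<exists>\<delta>>0. \<forall>r. \<sigma> < r \<and> r \<le> s0 \<and> r - \<sigma> < \<delta> \<longrightarrow> u r \<in> K" using e by blast
qed

section \<open>Solutions and existence times\<close>

lemma ode_sol_restrict:
  assumes sol: "ode_sol_on T U f x s \<phi>" and s': "0 \<le> s'" "s' \<le> s"
  shows "ode_sol_on T U f x s' \<phi>"
proof -
  have sub: "{0..s'} \<subseteq> {0..s}" using s' by auto
  have "ereal s' < T" using sol s' by (auto simp: ode_sol_on_def intro: le_less_trans[of _ "ereal s"])
  then show ?thesis
    using sol s' has_vector_derivative_within_subset[OF _ sub] sub unfolding ode_sol_on_def by blast
qed

lemma theta_ge: "ode_sol_on T U f x s \<phi> \<Longrightarrow> ereal s \<le> theta_f T U f x"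
  unfolding theta_f_def by (rule SUP_upper) auto

lemma D_f_solution:
  assumes "x \<in> D_f T U f t"
  obtains s \<phi> where "t < s" "ode_sol_on T U f x s \<phi>"
  using assms unfolding D_f_def theta_f_def by (auto simp: less_SUP_iff)

text \<open>The hypotheses of the theorem.\<close>
locale ode_setting =
  fixes C :: "'a::euclidean_space set" and U :: "'a set"
    and T :: ereal and f :: "real \<Rightarrow> 'a \<Rightarrow> 'a"
  assumes closedC: "closed C" and proper: "proper_cone C"
    and oreg: "order_regular C U" and convU: "convex U" and openU: "open U"
    and contf: "continuous_on (time_dom T \<times> U) (\<lambda>(t, x). f t x)"
    and qm: "\<And>t. t \<in> time_dom T \<Longrightarrow> quasi_monotone_inc C U (f t)"
    and cm: "\<And>t. t \<in> time_dom T \<Longrightarrow> convex_map C U (f t)"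
begin

lemma time_interval_subset: "0 \<le> \<tau> \<Longrightarrow> ereal \<tau> < T \<Longrightarrow> {0..\<tau>} \<subseteq> time_dom T"
  unfolding time_dom_def by (auto intro: le_less_trans[of _ "ereal \<tau>"])

lemma below_in_U: "v \<in> U \<Longrightarrow> c \<in> C \<Longrightarrow> v - c \<in> U"
  using oreg unfolding order_regular_def cone_le_def by auto

lemma f_bounded:
  assumes Q: "compact Q" "Q \<subseteq> U" and \<tau>: "0 \<le> \<tau>" "ereal \<tau> < T"
  obtains M where "\<And>\<sigma> v. \<sigma> \<in> {0..\<tau>} \<Longrightarrow> v \<in> Q \<Longrightarrow> norm (f \<sigma> v) \<le> M"
proof -
  have "{0..\<tau>} \<times> Q \<subseteq> time_dom T \<times> U" using time_interval_subset[OF \<tau>] Q by auto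
  then have "compact ((\<lambda>(t, x). f t x) ` ({0..\<tau>} \<times> Q))"
    by (intro compact_continuous_image continuous_on_subset[OF contf] compact_Times Q compact_Icc)
  then obtain M where "\<forall>y\<in>(\<lambda>(t, x). f t x) ` ({0..\<tau>} \<times> Q). norm y \<le> M"
    using compact_imp_bounded bounded_iff by metis
  then show ?thesis using that by blast
qed

text \<open>Convexity with respect to the cone makes \<open>f\<close> locally Lipschitz in the state variable.\<close>
lemma f_local_lipschitz:
  assumes \<tau>: "0 \<le> \<tau>" "ereal \<tau> < T"
  shows "local_lipschitz {0..\<tau>} U f"
proof (rule local_lipschitzI)
  fix t0 x0 assume x0: "x0 \<in> U"
  obtain e where e: "e > 0" "cball x0 e \<subseteq> U" using openU x0 open_contains_cball by blast
  define r where "r = e / 2"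
  have r: "r > 0" and rU: "cball x0 (2 * r) \<subseteq> U" using e by (auto simp: r_def)
  obtain M where M: "\<And>\<sigma> v. \<sigma> \<in> {0..\<tau>} \<Longrightarrow> v \<in> cball x0 (2 * r) \<Longrightarrow> norm (f \<sigma> v) \<le> M"
    using f_bounded[OF compact_cball rU \<tau>] by blast
  obtain a \<beta> where \<beta>: "\<beta> > 0" and a: "\<And>c. c \<in> C \<Longrightarrow> \<beta> * norm c \<le> inner a c"
    using pc_dual_interior[OF closedC proper] by blast
  define L where "L = DIM('a) * (4 * (norm a + \<beta>) * M / (r * \<beta>))"
  have "L-lipschitz_on (cball x0 r \<inter> U) (f t)" if t: "t \<in> {0..\<tau>}" for t
  proof (rule lipschitz_on_subset)
    have "convex_map C (cball x0 (2 * r)) (f t)"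
      using time_interval_subset[OF \<tau>] t by (intro convex_map_subset[OF cm rU convex_cball]) auto
    from cone_convex_map_lipschitz[OF \<beta> a r this M[OF t]]
    show "L-lipschitz_on (cball x0 r) (f t)" unfolding L_def .
  qed auto
  then show "\<exists>u>0. \<exists>L. \<forall>t\<in>cball t0 u \<inter> {0..\<tau>}. L-lipschitz_on (cball x0 u \<inter> U) (f t)"
    using r by blast
qed

lemma f_lipschitz_compact:
  assumes Q: "compact Q" "Q \<subseteq> U" and \<tau>: "0 \<le> \<tau>" "ereal \<tau> < T"
  obtains L where "0 \<le> L" "\<And>\<sigma>. \<sigma> \<in> {0..\<tau>} \<Longrightarrow> L-lipschitz_on Q (f \<sigma>)"
proof -
  have cont: "continuous_on {0..\<tau>} (\<lambda>t. f t x)" if "x \<in> Q" for x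
  proof -
    have "continuous_on {0..\<tau>} ((\<lambda>(t, x). f t x) \<circ> (\<lambda>t. (t, x)))"
      by (intro continuous_on_compose continuous_intros continuous_on_subset[OF contf])
        (use time_interval_subset[OF \<tau>] that Q in auto)
    then show ?thesis by (simp add: o_def)
  qed
  obtain L where "\<And>t. t \<in> {0..\<tau>} \<Longrightarrow> L-lipschitz_on Q (f t)"
    using local_lipschitz_compact_implies_lipschitz[OF local_lipschitz_subset[OF f_local_lipschitz[OF \<tau>] order_refl Q(2)]
        Q(1) compact_Icc cont] by metis
  moreover have "0 \<le> L" using calculation[of 0] \<tau> lipschitz_on_nonneg by auto
  ultimately show ?thesis using that by blast
qed

section \<open>A comparison principle\<close>

text \<open>Let \<open>w\<close> be a strict supersolution value (\<open>f(w) \<le> w'\<close>), \<open>u\<close> a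
  state, \<open>p\<close> the projection of \<open>w - u\<close> onto \<open>C\<close> and \<open>q = w - u - p\<close> the residual.  Projection
  properties and quasi-monotonicity (applied to \<open>w - p \<le> w\<close> and the functional \<open>-\<langle>q,\<cdot>\<rangle>\<close>)
  give \<open>\<langle>q, w' - f(u)\<rangle> \<le> L\<parallel>q\<parallel>\<^sup>2\<close>.\<close>
lemma projection_estimate:
  assumes \<sigma>: "\<sigma> \<in> time_dom T" and uw: "u \<in> Q" "w - p \<in> Q" "w \<in> U" and Q: "Q \<subseteq> U"
    and L: "L-lipschitz_on Q (f \<sigma>)" and sup: "cone_le C (f \<sigma> w) w'"
    and p: "p = closest_point C (w - u)"
  shows "inner (w - u - p) (w' - f \<sigma> u) \<le> L * (norm (w - u - p))\<^sup>2"
proof -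
  define q where "q = w - u - p"
  have polar: "inner q c \<le> 0" if "c \<in> C" for c
    using cone_projection(2)[OF closedC proper that] by (simp add: q_def p)
  have orth: "inner q p = 0" using cone_projection(3)[OF closedC proper] by (simp add: q_def p)
  have pC: "p \<in> C" using cone_projection(1)[OF closedC proper] by (simp add: p)
  have "inner q (w' - f \<sigma> w) \<le> 0" using polar sup by (simp add: cone_le_def)
  then have 1: "inner q w' \<le> inner q (f \<sigma> w)" by (simp add: inner_diff_right)
  define l where "l = (\<lambda>v. - inner q v)"
  have l: "l \<in> dual_cone C" unfolding l_def using polar
    by (simp add: dual_cone_def linear_compose_neg bounded_linear.linear[OF bounded_linear_inner_right])
  have "cone_le C (w - p) w" using pC by (simp add: cone_le_def)
  moreover have "l (w - p) = l w" using orth by (simp add: l_def inner_diff_right)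
  ultimately have "l (f \<sigma> (w - p)) \<le> l (f \<sigma> w)"
    using qm[OF \<sigma>] uw Q l unfolding quasi_monotone_inc_def by blast
  then have 2: "inner q (f \<sigma> w) \<le> inner q (f \<sigma> (w - p))" by (simp add: l_def)
  have "inner q (f \<sigma> (w - p) - f \<sigma> u) \<le> norm q * norm (f \<sigma> (w - p) - f \<sigma> u)"
    by (rule Cauchy_Schwarz_ineq2[THEN abs_le_D1])
  also have "\<dots> \<le> norm q * (L * norm ((w - p) - u))"
    using lipschitz_onD[OF L uw(2) uw(1)] by (intro mult_left_mono) (auto simp: dist_norm)
  also have "\<dots> = L * (norm q)\<^sup>2" by (simp add: q_def power2_eq_square algebra_simps)
  finally show ?thesis using 1 2 by (simp add: q_def inner_diff_right)
qed

text \<open>The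
  squared distance \<open>h\<close> of \<open>w - u\<close> to \<open>C\<close> satisfies a Dini inequality \<open>D\<^sup>+h \<le> 2L h\<close> and vanishes
  initially, so it vanishes identically by Gronwall.\<close>
lemma comparison:
  assumes \<tau>: "0 \<le> \<tau>" "ereal \<tau> < T"
    and uU: "\<And>\<sigma>. \<sigma> \<in> {0..\<tau>} \<Longrightarrow> u \<sigma> \<in> U" and wU: "\<And>\<sigma>. \<sigma> \<in> {0..\<tau>} \<Longrightarrow> w \<sigma> \<in> U"
    and ud: "\<And>\<sigma>. \<sigma> \<in> {0..\<tau>} \<Longrightarrow> (u has_vector_derivative f \<sigma> (u \<sigma>)) (at \<sigma> within {0..\<tau>})"
    and wd: "\<And>\<sigma>. \<sigma> \<in> {0..\<tau>} \<Longrightarrow> (w has_vector_derivative w' \<sigma>) (at \<sigma> within {0..\<tau>})"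
    and sup: "\<And>\<sigma>. \<sigma> \<in> {0..\<tau>} \<Longrightarrow> cone_le C (f \<sigma> (w \<sigma>)) (w' \<sigma>)"
    and init: "cone_le C (u 0) (w 0)"
    and s: "s \<in> {0..\<tau>}"
  shows "cone_le C (u s) (w s)"
proof -
  have CC: "convex C" "C \<noteq> {}" using pc_convex[OF proper] pc_zero[OF proper] by auto
  define p where "p = (\<lambda>\<sigma>. closest_point C (w \<sigma> - u \<sigma>))"
  define h where "h = (\<lambda>\<sigma>. (norm (w \<sigma> - u \<sigma> - p \<sigma>))\<^sup>2)"
  have uc: "continuous_on {0..\<tau>} u" by (rule continuous_on_vector_derivative[OF ud])
  have wc: "continuous_on {0..\<tau>} w" by (rule continuous_on_vector_derivative[OF wd])
  have pc: "continuous_on {0..\<tau>} p" unfolding p_def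
    by (rule continuous_on_compose2[OF continuous_on_closest_point[OF CC(1) closedC CC(2)]])
      (auto intro: continuous_intros uc wc)
  have pC: "p \<sigma> \<in> C" for \<sigma> using cone_projection(1)[OF closedC proper] by (simp add: p_def)
  define Q where "Q = u ` {0..\<tau>} \<union> (\<lambda>\<sigma>. w \<sigma> - p \<sigma>) ` {0..\<tau>}"
  have "compact Q" unfolding Q_def
    by (intro compact_Un compact_continuous_image uc continuous_intros wc pc compact_Icc)
  moreover have QU: "Q \<subseteq> U" unfolding Q_def using uU wU below_in_U pC by auto
  ultimately obtain L where L0: "0 \<le> L" and L: "\<And>\<sigma>. \<sigma> \<in> {0..\<tau>} \<Longrightarrow> L-lipschitz_on Q (f \<sigma>)"
    using f_lipschitz_compact[OF _ _ \<tau>] by blast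
  have dini: "\<exists>\<delta>>0. \<forall>r. \<sigma> < r \<and> r \<le> \<tau> \<and> r - \<sigma> < \<delta> \<longrightarrow>
               h r \<le> h \<sigma> + (r - \<sigma>) * ((2 * L) * max (h \<sigma>) 0 + \<epsilon>)"
    if \<sigma>: "\<sigma> \<in> {0..<\<tau>}" and \<epsilon>: "\<epsilon> > 0" for \<sigma> \<epsilon>
  proof -
    have \<sigma>': "\<sigma> \<in> {0..\<tau>}" using \<sigma> by auto
    define q where "q = w \<sigma> - u \<sigma> - p \<sigma>"
    have "((\<lambda>r. w r - u r) has_vector_derivative w' \<sigma> - f \<sigma> (u \<sigma>)) (at \<sigma> within {0..\<tau>})"
      by (intro derivative_intros wd ud \<sigma>')
    moreover have "inner q (w' \<sigma> - f \<sigma> (u \<sigma>)) \<le> L * h \<sigma>"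
      unfolding q_def h_def p_def
      by (rule projection_estimate[OF _ _ _ wU QU L sup])
        (use \<sigma>' time_interval_subset[OF \<tau>] in \<open>auto simp: Q_def p_def\<close>)
    ultimately obtain \<delta> where "\<delta> > 0" and near: "\<And>r. r \<in> {0..\<tau>} \<Longrightarrow> \<sigma> < r \<Longrightarrow> r - \<sigma> < \<delta> \<Longrightarrow>
        (norm ((w r - u r) - (w \<sigma> - u \<sigma>) + q))\<^sup>2 \<le> (norm q)\<^sup>2 + (r - \<sigma>) * (2 * (L * h \<sigma>) + \<epsilon>)"
      using dini_norm_square[OF _ \<epsilon>] by blast
    have "h r \<le> h \<sigma> + (r - \<sigma>) * ((2 * L) * max (h \<sigma>) 0 + \<epsilon>)"
      if r: "\<sigma> < r" "r \<le> \<tau>" "r - \<sigma> < \<delta>" for r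
    proof -
      have "dist (w r - u r) (p r) \<le> dist (w r - u r) (p \<sigma>)"
        using closest_point_le[OF closedC pC[of \<sigma>], of "w r - u r"] by (simp add: p_def)
      then have "h r \<le> (dist (w r - u r) (p \<sigma>))\<^sup>2"
        unfolding h_def dist_norm by (intro power_mono) auto
      also have "\<dots> = (norm ((w r - u r) - (w \<sigma> - u \<sigma>) + q))\<^sup>2" by (simp add: dist_norm q_def)
      also have "\<dots> \<le> (norm q)\<^sup>2 + (r - \<sigma>) * (2 * (L * h \<sigma>) + \<epsilon>)" using near r \<sigma> by auto
      finally show ?thesis by (simp add: h_def q_def mult.assoc)
    qed
    then show ?thesis using \<open>\<delta> > 0\<close> by blast
  qed
  have h0: "h 0 = 0"
    using closest_point_self[of "w 0 - u 0" C] init by (simp add: h_def p_def cone_le_def)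
  have "continuous_on {0..\<tau>} h" unfolding h_def by (intro continuous_intros uc wc pc)
  from gronwall_dini_zero[OF this _ _ dini s] L0 h0 have "h s \<le> 0" by simp
  then have "w s - u s = p s" by (simp add: h_def)
  then show ?thesis using pC[of s] by (simp add: cone_le_def)
qed

section \<open>A priori bounds and existence below a supersolution\<close>

lemma f_affine_lower_bound:
  assumes \<tau>: "0 \<le> \<tau>" "ereal \<tau> < T" and z: "z \<in> U" and adual: "(\<lambda>v. inner a v) \<in> dual_cone C"
  obtains A B where "0 \<le> A" "0 \<le> B"
    "\<And>\<sigma> v. \<sigma> \<in> {0..\<tau>} \<Longrightarrow> v \<in> U \<Longrightarrow> - A - B * norm v \<le> inner a (f \<sigma> v)"
proof -
  obtain r where r: "r > 0" "cball z r \<subseteq> U" using openU z open_contains_cball by blast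
  obtain M where M: "\<And>\<sigma> v. \<sigma> \<in> {0..\<tau>} \<Longrightarrow> v \<in> cball z r \<Longrightarrow> norm (f \<sigma> v) \<le> M"
    using f_bounded[OF compact_cball r(2) \<tau>] by blast
  define Ma where "Ma = norm a * M"
  have "0 \<le> M" using M[of 0 z] \<tau> r by (auto intro: order_trans[OF norm_ge_zero])
  then have Ma: "0 \<le> Ma" by (simp add: Ma_def)
  show ?thesis
  proof
    show "0 \<le> 2 * Ma + 2 * Ma / r * norm z" "0 \<le> 2 * Ma / r" using Ma r by auto
    fix \<sigma> v assume \<sigma>: "\<sigma> \<in> {0..\<tau>}" and v: "v \<in> U"
    have "convex_on U (\<lambda>v. inner a (f \<sigma> v))"
      using dual_cone_convex_on[OF adual cm] time_interval_subset[OF \<tau>] \<sigma> by blast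
    moreover have "\<bar>inner a (f \<sigma> v)\<bar> \<le> Ma" if "v \<in> cball z r" for v
      using Cauchy_Schwarz_ineq2[of a "f \<sigma> v"] mult_left_mono[OF M[OF \<sigma> that], of "norm a"]
      by (simp add: Ma_def)
    ultimately have "- 2 * Ma - (2 * Ma / r) * norm (v - z) \<le> inner a (f \<sigma> v)"
      by (rule convex_affine_lower_bound[OF _ r(1) r(2) _ v])
    moreover have "(2 * Ma / r) * norm (v - z) \<le> (2 * Ma / r) * (norm v + norm z)"
      using norm_triangle_ineq4[of v z] Ma r by (intro mult_left_mono) auto
    ultimately show "- (2 * Ma + 2 * Ma / r * norm z) - 2 * Ma / r * norm v \<le> inner a (f \<sigma> v)"
      by (simp add: algebra_simps add_divide_distrib)
  qed
qed

text \<open>Along a curve \<open>w\<close> bounded by \<open>Wb\<close>, the drift \<open>-\<langle>a, f(\<sigma>,v)\<rangle>\<close> at points \<open>v \<le> w(\<sigma>)\<close> grows at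
  most linearly in \<open>(-\<langle>a,v\<rangle>)\<^sup>+\<close>: combine the affine bound on \<open>f\<close> with the norm bound for
  order-bounded points.\<close>
lemma drift_bound_below_curve:
  assumes s0: "0 \<le> s0" "ereal s0 < T" and z: "z \<in> U"
    and \<beta>: "\<beta> > 0" and a: "\<And>c. c \<in> C \<Longrightarrow> \<beta> * norm c \<le> inner a c"
    and Wb: "\<And>\<sigma>. \<sigma> \<in> {0..s0} \<Longrightarrow> norm (w \<sigma>) \<le> Wb"
  obtains P K where "0 \<le> P" "0 \<le> K" "\<And>\<sigma> v. \<sigma> \<in> {0..s0} \<Longrightarrow> v \<in> U \<Longrightarrow> cone_le C v (w \<sigma>) \<Longrightarrow>
      - inner a (f \<sigma> v) \<le> P + K * max (- inner a v) 0"
proof -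
  have "(\<lambda>v. inner a v) \<in> dual_cone C" by (rule positive_functional_dual[OF \<beta> a])
  then obtain A B where AB: "0 \<le> A" "0 \<le> B"
    and fl: "\<And>\<sigma> v. \<sigma> \<in> {0..s0} \<Longrightarrow> v \<in> U \<Longrightarrow> - A - B * norm v \<le> inner a (f \<sigma> v)"
    using f_affine_lower_bound[OF s0 z] by blast
  have Wb0: "0 \<le> Wb" using Wb[of 0] s0 by (auto intro: order_trans[OF norm_ge_zero])
  define K where "K = B / \<beta>"
  define P where "P = A + B * Wb + B * (norm a * Wb) / \<beta>"
  show ?thesis
  proof
    show "0 \<le> P" "0 \<le> K" using AB \<beta> Wb0 by (auto simp: K_def P_def)
    fix \<sigma> v assume \<sigma>: "\<sigma> \<in> {0..s0}" and v: "v \<in> U" "cone_le C v (w \<sigma>)"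
    have "norm a * norm (w \<sigma>) - inner a v \<le> norm a * Wb + max (- inner a v) 0"
      using mult_left_mono[OF Wb[OF \<sigma>] norm_ge_zero[of a]] max.cobounded1[of "- inner a v" 0] by linarith
    then have "(norm a * norm (w \<sigma>) - inner a v) / \<beta> \<le> (norm a * Wb + max (- inner a v) 0) / \<beta>"
      using \<beta> by (simp add: divide_right_mono)
    then have "norm v \<le> Wb + (norm a * Wb + max (- inner a v) 0) / \<beta>"
      using below_norm_bound[OF \<beta> a v(2)] Wb[OF \<sigma>] by linarith
    then have "A + B * norm v \<le> A + B * (Wb + (norm a * Wb + max (- inner a v) 0) / \<beta>)"
      using AB by (intro add_left_mono mult_left_mono) auto
    also have "\<dots> = P + K * max (- inner a v) 0" by (simp add: P_def K_def field_simps add_divide_distrib)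
    finally show "- inner a (f \<sigma> v) \<le> P + K * max (- inner a v) 0" using fl[OF \<sigma> v(1)] by simp
  qed
qed

text \<open>A priori bound: solutions from \<open>z\<close> that stay below a bounded curve \<open>w\<close> have \<open>\<langle>a,u\<rangle>\<close>
  bounded below, since \<open>m = -\<langle>a,u\<rangle>\<close> satisfies \<open>m' \<le> P + K m\<^sup>+\<close> and Gronwall applies.\<close>
lemma a_priori_lower_bound:
  assumes s0: "0 \<le> s0" "ereal s0 < T" and z: "z \<in> U"
    and \<beta>: "\<beta> > 0" and a: "\<And>c. c \<in> C \<Longrightarrow> \<beta> * norm c \<le> inner a c"
    and Wb: "\<And>\<sigma>. \<sigma> \<in> {0..s0} \<Longrightarrow> norm (w \<sigma>) \<le> Wb"
  obtains R where "\<And>\<tau> u \<sigma>. \<tau> \<in> {0..s0} \<Longrightarrow> u 0 = z \<Longrightarrow> (\<And>\<sigma>. \<sigma> \<in> {0..\<tau>} \<Longrightarrow> u \<sigma> \<in> U) \<Longrightarrow>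
      (\<And>\<sigma>. \<sigma> \<in> {0..\<tau>} \<Longrightarrow> (u has_vector_derivative f \<sigma> (u \<sigma>)) (at \<sigma> within {0..\<tau>})) \<Longrightarrow>
      (\<And>\<sigma>. \<sigma> \<in> {0..\<tau>} \<Longrightarrow> cone_le C (u \<sigma>) (w \<sigma>)) \<Longrightarrow> \<sigma> \<in> {0..\<tau>} \<Longrightarrow> - R \<le> inner a (u \<sigma>)"
proof -
  obtain P K where P: "0 \<le> P" and K: "0 \<le> K" and drift: "\<And>\<sigma> v. \<sigma> \<in> {0..s0} \<Longrightarrow> v \<in> U \<Longrightarrow>
      cone_le C v (w \<sigma>) \<Longrightarrow> - inner a (f \<sigma> v) \<le> P + K * max (- inner a v) 0"
    using drift_bound_below_curve[where w=w and Wb=Wb, OF s0 z \<beta> a Wb] by blast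
  show ?thesis
  proof (rule that)
    fix \<tau> u \<sigma>
    assume \<tau>: "\<tau> \<in> {0..s0}" and u0: "u 0 = z" and uU: "\<And>\<sigma>. \<sigma> \<in> {0..\<tau>} \<Longrightarrow> u \<sigma> \<in> U"
      and ud: "\<And>\<sigma>. \<sigma> \<in> {0..\<tau>} \<Longrightarrow> (u has_vector_derivative f \<sigma> (u \<sigma>)) (at \<sigma> within {0..\<tau>})"
      and uw: "\<And>\<sigma>. \<sigma> \<in> {0..\<tau>} \<Longrightarrow> cone_le C (u \<sigma>) (w \<sigma>)" and \<sigma>: "\<sigma> \<in> {0..\<tau>}"
    define m where "m = (\<lambda>\<sigma>. - inner a (u \<sigma>))"
    have dini: "\<exists>\<delta>>0. \<forall>r. \<rho> < r \<and> r \<le> \<tau> \<and> r - \<rho> < \<delta> \<longrightarrow> m r \<le> m \<rho> + (r - \<rho>) * (P + K * max (m \<rho>) 0 + \<epsilon>)"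
      if \<rho>: "\<rho> \<in> {0..<\<tau>}" and \<epsilon>: "\<epsilon> > 0" for \<rho> \<epsilon>
    proof -
      have \<rho>': "\<rho> \<in> {0..\<tau>}" "\<rho> \<in> {0..s0}" using \<rho> \<tau> by auto
      have "(m has_vector_derivative - inner a (f \<rho> (u \<rho>))) (at \<rho> within {0..\<tau>})"
        unfolding m_def using bounded_linear.has_vector_derivative[OF bounded_linear_inner_right ud[OF \<rho>'(1)]]
        by (intro derivative_intros) auto
      moreover have "- inner a (f \<rho> (u \<rho>)) \<le> P + K * max (m \<rho>) 0"
        using drift[OF \<rho>'(2) uU uw] \<rho>' by (simp add: m_def)
      ultimately obtain \<delta> where "\<delta> > 0"
        "\<forall>r\<in>{0..\<tau>}. \<rho> < r \<and> r - \<rho> < \<delta> \<longrightarrow> m r \<le> m \<rho> + (r - \<rho>) * (P + K * max (m \<rho>) 0 + \<epsilon>)"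
        using dini_real[OF _ _ \<epsilon>] by blast
      then show ?thesis using \<rho> by (intro exI[of _ \<delta>]) auto
    qed
    have mc: "continuous_on {0..\<tau>} m"
      unfolding m_def by (intro continuous_intros continuous_on_vector_derivative[OF ud])
    have "m \<sigma> \<le> (max (m 0) 0 + P + 1) * exp ((K + 1) * \<sigma>)"
      by (rule gronwall_dini[OF mc K P _ dini \<sigma>]) auto
    also have "\<dots> \<le> (\<bar>inner a z\<bar> + P + 1) * exp ((K + 1) * s0)"
    proof (rule mult_mono)
      show "max (m 0) 0 + P + 1 \<le> \<bar>inner a z\<bar> + P + 1" using u0 by (simp add: m_def)
      show "exp ((K + 1) * \<sigma>) \<le> exp ((K + 1) * s0)"
        using \<sigma> \<tau> K by (subst exp_le_cancel_iff) (intro mult_left_mono, auto)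
    qed (use P in auto)
    finally show "- ((\<bar>inner a z\<bar> + P + 1) * exp ((K + 1) * s0)) \<le> inner a (u \<sigma>)" by (simp add: m_def)
  qed
qed

text \<open>Global solutions of the equation truncated by the metric projection onto a compact convex
  set \<open>K2 \<subseteq> U\<close>; the truncated right-hand side is globally Lipschitz and bounded.\<close>
lemma truncated_solution:
  assumes s0: "0 \<le> s0" "ereal s0 < T" and K2: "compact K2" "convex K2" "K2 \<subseteq> U" "K2 \<noteq> {}"
  obtains u where "u 0 = z" "continuous_on {0..s0} u"
    "\<And>\<sigma>. \<sigma> \<in> {0..s0} \<Longrightarrow> (u has_vector_derivative f \<sigma> (closest_point K2 (u \<sigma>))) (at \<sigma> within {0..s0})"
proof -
  define P where "P = closest_point K2"
  have K2cl: "closed K2" by (rule compact_imp_closed[OF K2(1)])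
  have PK2: "P v \<in> K2" for v unfolding P_def by (rule closest_point_in_set[OF K2cl K2(4)])
  obtain L where L0: "0 \<le> L" and L: "\<And>\<sigma>. \<sigma> \<in> {0..s0} \<Longrightarrow> L-lipschitz_on K2 (f \<sigma>)"
    using f_lipschitz_compact[OF K2(1,3) s0] by blast
  obtain M where M: "\<And>\<sigma> v. \<sigma> \<in> {0..s0} \<Longrightarrow> v \<in> K2 \<Longrightarrow> norm (f \<sigma> v) \<le> M"
    using f_bounded[OF K2(1,3) s0] by blast
  interpret picard_setting "\<lambda>\<sigma> v. f \<sigma> (P v)" s0 L M
  proof
    show "0 \<le> s0" "0 \<le> L" using s0 L0 by auto
  next
    fix v :: "real \<Rightarrow> 'a" assume vc: "continuous_on {0..s0} v"
    have "continuous_on {0..s0} (\<lambda>r. P (v r))" unfolding P_def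
      by (rule continuous_on_compose2[OF continuous_on_closest_point[OF K2(2) K2cl K2(4)] vc]) auto
    then have "continuous_on {0..s0} ((\<lambda>(t, x). f t x) \<circ> (\<lambda>r. (r, P (v r))))"
      by (intro continuous_on_compose continuous_intros continuous_on_subset[OF contf])
        (use time_interval_subset[OF s0] PK2 K2(3) in auto)
    then show "continuous_on {0..s0} (\<lambda>r. f r (P (v r)))" by (simp add: o_def)
  next
    fix \<sigma> v w assume \<sigma>: "\<sigma> \<in> {0..s0}"
    have "norm (f \<sigma> (P v) - f \<sigma> (P w)) \<le> L * norm (P v - P w)"
      using lipschitz_onD[OF L[OF \<sigma>] PK2 PK2] by (simp add: dist_norm)
    also have "\<dots> \<le> L * norm (v - w)"
      using closest_point_lipschitz[OF K2(2) K2cl K2(4)] L0 by (intro mult_left_mono) (simp_all add: P_def dist_norm)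
    finally show "norm (f \<sigma> (P v) - f \<sigma> (P w)) \<le> L * norm (v - w)" .
  next
    fix \<sigma> v assume "\<sigma> \<in> {0..s0}"
    then show "norm (f \<sigma> (P v)) \<le> M" by (rule M[OF _ PK2])
  qed
  from picard_existence[of z] show ?thesis using that by (auto simp: P_def)
qed

text \<open>A trapping set: solutions from \<open>z\<close> that stay below a continuous curve \<open>w\<close> in \<open>U\<close> remain
  in a fixed compact subset of \<open>U\<close>, namely the points below \<open>w\<close> obeying the a priori bound.\<close>
lemma trapping_set:
  assumes s0: "0 \<le> s0" "ereal s0 < T" and z: "z \<in> U"
    and wU: "\<And>\<sigma>. \<sigma> \<in> {0..s0} \<Longrightarrow> w \<sigma> \<in> U" and wc: "continuous_on {0..s0} w"
    and init: "cone_le C z (w 0)"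
  obtains K where "compact K" "K \<subseteq> U" "z \<in> K"
    "\<And>\<tau> u. \<tau> \<in> {0..s0} \<Longrightarrow> u 0 = z \<Longrightarrow> (\<And>\<sigma>. \<sigma> \<in> {0..\<tau>} \<Longrightarrow> u \<sigma> \<in> U) \<Longrightarrow>
      (\<And>\<sigma>. \<sigma> \<in> {0..\<tau>} \<Longrightarrow> (u has_vector_derivative f \<sigma> (u \<sigma>)) (at \<sigma> within {0..\<tau>})) \<Longrightarrow>
      (\<And>\<sigma>. \<sigma> \<in> {0..\<tau>} \<Longrightarrow> cone_le C (u \<sigma>) (w \<sigma>)) \<Longrightarrow> u \<tau> \<in> K"
proof -
  obtain Wb where Wb: "\<And>\<sigma>. \<sigma> \<in> {0..s0} \<Longrightarrow> norm (w \<sigma>) \<le> Wb"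
    using compact_imp_bounded[OF compact_continuous_image[OF wc compact_Icc]] bounded_iff by (metis imageI)
  obtain a \<beta> where \<beta>: "\<beta> > 0" and a: "\<And>c. c \<in> C \<Longrightarrow> \<beta> * norm c \<le> inner a c"
    using pc_dual_interior[OF closedC proper] by blast
  obtain R where R: "\<And>\<tau> u \<sigma>. \<tau> \<in> {0..s0} \<Longrightarrow> u 0 = z \<Longrightarrow> (\<And>\<sigma>. \<sigma> \<in> {0..\<tau>} \<Longrightarrow> u \<sigma> \<in> U) \<Longrightarrow>
      (\<And>\<sigma>. \<sigma> \<in> {0..\<tau>} \<Longrightarrow> (u has_vector_derivative f \<sigma> (u \<sigma>)) (at \<sigma> within {0..\<tau>})) \<Longrightarrow>
      (\<And>\<sigma>. \<sigma> \<in> {0..\<tau>} \<Longrightarrow> cone_le C (u \<sigma>) (w \<sigma>)) \<Longrightarrow> \<sigma> \<in> {0..\<tau>} \<Longrightarrow> - R \<le> inner a (u \<sigma>)"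
    using a_priori_lower_bound[where w=w and Wb=Wb, OF s0 z \<beta> a Wb] by blast
  define K where "K = {v. \<exists>\<sigma>\<in>{0..s0}. cone_le C v (w \<sigma>) \<and> - max R (- inner a z) \<le> inner a v}"
  show ?thesis
  proof
    show "compact K" unfolding K_def by (rule compact_below_curve[OF closedC \<beta> a wc])
    show "K \<subseteq> U" unfolding K_def cone_le_def using wU below_in_U by force
    show "z \<in> K" using init s0 by (auto simp: K_def intro!: bexI[of _ 0])
    fix \<tau> u assume \<tau>: "\<tau> \<in> {0..s0}" and u0: "u 0 = z" and uU: "\<And>\<sigma>. \<sigma> \<in> {0..\<tau>} \<Longrightarrow> u \<sigma> \<in> U"
      and ud: "\<And>\<sigma>. \<sigma> \<in> {0..\<tau>} \<Longrightarrow> (u has_vector_derivative f \<sigma> (u \<sigma>)) (at \<sigma> within {0..\<tau>})"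
      and uw: "\<And>\<sigma>. \<sigma> \<in> {0..\<tau>} \<Longrightarrow> cone_le C (u \<sigma>) (w \<sigma>)"
    have "- R \<le> inner a (u \<tau>)" using R[OF \<tau> u0 uU ud uw] \<tau> by simp
    then show "u \<tau> \<in> K" using uw[of \<tau>] \<tau> by (auto simp: K_def)
  qed
qed

text \<open>The solution of the
  equation truncated near the trapping set \<open>K\<close> is trapped in \<open>K\<close>, where the truncation is
  inactive.\<close>
lemma solution_below_supersolution:
  assumes s0: "0 \<le> s0" "ereal s0 < T" and z: "z \<in> U"
    and wU: "\<And>\<sigma>. \<sigma> \<in> {0..s0} \<Longrightarrow> w \<sigma> \<in> U"
    and wd: "\<And>\<sigma>. \<sigma> \<in> {0..s0} \<Longrightarrow> (w has_vector_derivative w' \<sigma>) (at \<sigma> within {0..s0})"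
    and sup: "\<And>\<sigma>. \<sigma> \<in> {0..s0} \<Longrightarrow> cone_le C (f \<sigma> (w \<sigma>)) (w' \<sigma>)"
    and init: "cone_le C z (w 0)"
  obtains u where "ode_sol_on T U f z s0 u" "\<And>\<sigma>. \<sigma> \<in> {0..s0} \<Longrightarrow> cone_le C (u \<sigma>) (w \<sigma>)"
proof -
  obtain K where Kc: "compact K" and KU: "K \<subseteq> U" and zK: "z \<in> K"
    and trap: "\<And>\<tau> u. \<tau> \<in> {0..s0} \<Longrightarrow> u 0 = z \<Longrightarrow> (\<And>\<sigma>. \<sigma> \<in> {0..\<tau>} \<Longrightarrow> u \<sigma> \<in> U) \<Longrightarrow>
      (\<And>\<sigma>. \<sigma> \<in> {0..\<tau>} \<Longrightarrow> (u has_vector_derivative f \<sigma> (u \<sigma>)) (at \<sigma> within {0..\<tau>})) \<Longrightarrow>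
      (\<And>\<sigma>. \<sigma> \<in> {0..\<tau>} \<Longrightarrow> cone_le C (u \<sigma>) (w \<sigma>)) \<Longrightarrow> u \<tau> \<in> K"
    using trapping_set[OF s0 z wU continuous_on_vector_derivative[OF wd] init] by blast
  obtain K2 \<delta> where K2: "compact K2" "convex K2" "K2 \<subseteq> U" and \<delta>: "\<delta> > 0"
    and nbhd: "\<And>v. v \<in> K \<Longrightarrow> cball v \<delta> \<subseteq> K2"
    using compact_convex_neighbourhood[OF Kc KU openU convU] by blast
  have KK2: "K \<subseteq> K2" using nbhd \<delta> by fastforce
  obtain u where u0: "u 0 = z" and uc: "continuous_on {0..s0} u" and ud: "\<And>\<sigma>. \<sigma> \<in> {0..s0} \<Longrightarrow>
      (u has_vector_derivative f \<sigma> (closest_point K2 (u \<sigma>))) (at \<sigma> within {0..s0})"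
    using truncated_solution[OF s0 K2] zK KK2 by blast
  text \<open>As long as \<open>u\<close> stays in \<open>K2\<close> it solves the original equation, hence stays below \<open>w\<close>
    by comparison, hence ends in \<open>K\<close>.\<close>
  have restricted: "(\<forall>\<sigma>\<in>{0..\<tau>}. u \<sigma> \<in> U \<and> (u has_vector_derivative f \<sigma> (u \<sigma>)) (at \<sigma> within {0..\<tau>}))
      \<and> (\<forall>\<sigma>\<in>{0..\<tau>}. cone_le C (u \<sigma>) (w \<sigma>)) \<and> u \<tau> \<in> K"
    if \<tau>: "\<tau> \<in> {0..s0}" and inK2: "\<And>\<sigma>. \<sigma> \<in> {0..\<tau>} \<Longrightarrow> u \<sigma> \<in> K2" for \<tau>
  proof -
    have sub: "{0..\<tau>} \<subseteq> {0..s0}" using \<tau> by auto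
    have \<tau>': "0 \<le> \<tau>" "ereal \<tau> < T" using \<tau> s0 by (auto intro: le_less_trans[of _ "ereal s0"])
    have uU: "u \<sigma> \<in> U" if "\<sigma> \<in> {0..\<tau>}" for \<sigma> using inK2[OF that] K2 by auto
    have udt: "(u has_vector_derivative f \<sigma> (u \<sigma>)) (at \<sigma> within {0..\<tau>})" if \<sigma>: "\<sigma> \<in> {0..\<tau>}" for \<sigma>
    proof -
      have "\<sigma> \<in> {0..s0}" using \<sigma> sub by auto
      from has_vector_derivative_within_subset[OF ud[OF this] sub] show ?thesis
        using closest_point_self[OF inK2[OF \<sigma>]] by simp
    qed
    have le: "cone_le C (u \<sigma>) (w \<sigma>)" if \<sigma>: "\<sigma> \<in> {0..\<tau>}" for \<sigma>
      by (rule comparison[OF \<tau>' uU wU udt has_vector_derivative_within_subset[OF wd sub] sup _ \<sigma>])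
        (use sub u0 init in auto)
    show ?thesis using uU udt le trap[OF \<tau> u0 uU udt le] by blast
  qed
  have "u \<sigma> \<in> K" if "\<sigma> \<in> {0..s0}" for \<sigma>
    by (rule trapped_curve[OF uc compact_imp_closed[OF Kc] _ \<delta> nbhd _ that])
      (use u0 zK restricted in auto)
  then have "(\<forall>\<sigma>\<in>{0..s0}. u \<sigma> \<in> U \<and> (u has_vector_derivative f \<sigma> (u \<sigma>)) (at \<sigma> within {0..s0}))
      \<and> (\<forall>\<sigma>\<in>{0..s0}. cone_le C (u \<sigma>) (w \<sigma>))"
    using restricted[of s0] s0 KK2 by auto
  then show ?thesis using that u0 s0 by (auto simp: ode_sol_on_def)
qed

section \<open>Uniqueness and the flow map\<close>

text \<open>Uniqueness, from the comparison principle applied in both directions.\<close>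
lemma solution_unique:
  assumes sol1: "ode_sol_on T U f x s1 \<phi>1" and sol2: "ode_sol_on T U f x s2 \<phi>2"
    and \<sigma>: "0 \<le> \<sigma>" "\<sigma> \<le> s1" "\<sigma> \<le> s2"
  shows "\<phi>1 \<sigma> = \<phi>2 \<sigma>"
proof -
  define \<tau> where "\<tau> = min s1 s2"
  have \<tau>: "0 \<le> \<tau>" "\<tau> \<le> s1" "\<tau> \<le> s2" "\<sigma> \<in> {0..\<tau>}" using \<sigma> by (auto simp: \<tau>_def)
  have le: "cone_le C (p \<sigma>) (q \<sigma>)" if p: "ode_sol_on T U f x \<tau> p" and q: "ode_sol_on T U f x \<tau> q" for p q
    by (rule comparison[of \<tau> p q "\<lambda>\<sigma>. f \<sigma> (q \<sigma>)"])
       (use p q \<tau> in \<open>auto simp: ode_sol_on_def cone_le_refl[OF proper]\<close>)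
  have "ode_sol_on T U f x \<tau> \<phi>1" "ode_sol_on T U f x \<tau> \<phi>2"
    using ode_sol_restrict[OF sol1 \<tau>(1,2)] ode_sol_restrict[OF sol2 \<tau>(1,3)] .
  then show ?thesis using cone_le_antisym[OF proper] le by blast
qed

lemma psi_f_eq:
  assumes sol: "ode_sol_on T U f x s \<phi>" and t: "0 \<le> t" "t \<le> s"
  shows "psi_f T U f t x = \<phi> t"
  unfolding psi_f_def
proof (rule the_equality)
  show "\<exists>s' \<phi>'. t \<le> s' \<and> ode_sol_on T U f x s' \<phi>' \<and> \<phi>' t = \<phi> t" using sol t by blast
  fix y assume "\<exists>s' \<phi>'. t \<le> s' \<and> ode_sol_on T U f x s' \<phi>' \<and> \<phi>' t = y"
  then show "y = \<phi> t" using solution_unique[OF _ sol] t by blast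
qed

section \<open>Convexity of the flow\<close>

text \<open>If \<open>x, y \<in> \<D>\<^sub>f(t)\<close>, the convex combination \<open>w = c\<phi>\<^sub>x + (1-c)\<phi>\<^sub>y\<close> of
  their solutions is a supersolution, because \<open>f(\<sigma>,\<cdot>)\<close> is convex.  So the solution from
  \<open>w(0) = cx + (1-c)y\<close> exists as long as \<open>w\<close> does and stays below it.\<close>
lemma flow_convex_combination:
  assumes t: "t \<in> time_dom T" and x: "x \<in> D_f T U f t" and y: "y \<in> D_f T U f t"
    and c: "0 \<le> c" "c \<le> 1"
  shows "c *\<^sub>R x + (1 - c) *\<^sub>R y \<in> D_f T U f t \<and>
    cone_le C (psi_f T U f t (c *\<^sub>R x + (1 - c) *\<^sub>R y)) (c *\<^sub>R psi_f T U f t x + (1 - c) *\<^sub>R psi_f T U f t y)"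
proof -
  have t0: "0 \<le> t" using t by (simp add: time_dom_def)
  obtain sx \<phi>x where sx: "t < sx" "ode_sol_on T U f x sx \<phi>x" using D_f_solution[OF x] by blast
  obtain sy \<phi>y where sy: "t < sy" "ode_sol_on T U f y sy \<phi>y" using D_f_solution[OF y] by blast
  define s0 where "s0 = min sx sy"
  have ts0: "t < s0" using sx sy by (simp add: s0_def)
  have solx: "ode_sol_on T U f x s0 \<phi>x" by (rule ode_sol_restrict[OF sx(2)]) (use t0 ts0 in \<open>auto simp: s0_def\<close>)
  have soly: "ode_sol_on T U f y s0 \<phi>y" by (rule ode_sol_restrict[OF sy(2)]) (use t0 ts0 in \<open>auto simp: s0_def\<close>)
  have s0: "0 \<le> s0" "ereal s0 < T" using solx by (auto simp: ode_sol_on_def)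
  define w where "w = (\<lambda>\<sigma>. c *\<^sub>R \<phi>x \<sigma> + (1 - c) *\<^sub>R \<phi>y \<sigma>)"
  define w' where "w' = (\<lambda>\<sigma>. c *\<^sub>R f \<sigma> (\<phi>x \<sigma>) + (1 - c) *\<^sub>R f \<sigma> (\<phi>y \<sigma>))"
  have xy: "\<phi>x \<sigma> \<in> U" "\<phi>y \<sigma> \<in> U" if "\<sigma> \<in> {0..s0}" for \<sigma> using solx soly that by (auto simp: ode_sol_on_def)
  have wU: "w \<sigma> \<in> U" if "\<sigma> \<in> {0..s0}" for \<sigma>
    unfolding w_def by (rule convexD[OF convU xy[OF that]]) (use c in auto)
  have wd: "(w has_vector_derivative w' \<sigma>) (at \<sigma> within {0..s0})" if "\<sigma> \<in> {0..s0}" for \<sigma>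
    using solx soly that unfolding w_def w'_def ode_sol_on_def
    by (intro has_vector_derivative_add bounded_linear.has_vector_derivative[OF bounded_linear_scaleR_right]) auto
  have sup: "cone_le C (f \<sigma> (w \<sigma>)) (w' \<sigma>)" if "\<sigma> \<in> {0..s0}" for \<sigma>
    using cm[of \<sigma>] time_interval_subset[OF s0] xy[OF that] c that unfolding convex_map_def w_def w'_def
    by blast
  have w0: "w 0 = c *\<^sub>R x + (1 - c) *\<^sub>R y" using solx soly by (simp add: w_def ode_sol_on_def)
  obtain u where solz: "ode_sol_on T U f (w 0) s0 u" and below: "\<And>\<sigma>. \<sigma> \<in> {0..s0} \<Longrightarrow> cone_le C (u \<sigma>) (w \<sigma>)"
    using solution_below_supersolution[OF s0 wU[of 0] wU wd sup cone_le_refl[OF proper]] s0 by auto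
  have "w 0 \<in> D_f T U f t"
    using wU[of 0] theta_ge[OF solz] ts0 s0 by (auto simp: D_f_def intro: less_le_trans[of _ "ereal s0"])
  moreover have "psi_f T U f t (w 0) = u t" "psi_f T U f t x = \<phi>x t" "psi_f T U f t y = \<phi>y t"
    using psi_f_eq[OF solz t0] psi_f_eq[OF solx t0] psi_f_eq[OF soly t0] ts0 by auto
  ultimately show ?thesis using below[of t] t0 ts0 w0 by (simp add: w_def)
qed

end

theorem theorem1:
  fixes C :: "'a::euclidean_space set" and U :: "'a set"
    and T :: ereal and f :: "real \<Rightarrow> 'a \<Rightarrow> 'a"
  assumes "closed C" and "proper_cone C"
    and "U \<noteq> {}" and "order_regular C U" and "convex U" and "open U"
    and "0 < T"
    and "continuous_on (time_dom T \<times> U) (\<lambda>(t, x). f t x)"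
    and "\<And>t. t \<in> time_dom T \<Longrightarrow> quasi_monotone_inc C U (f t)"
    and "\<And>t. t \<in> time_dom T \<Longrightarrow> convex_map C U (f t)"
  shows "\<forall>t\<in>time_dom T. convex (D_f T U f t) \<and>
           (\<forall>x\<in>D_f T U f t. \<forall>y\<in>D_f T U f t. \<forall>c::real. 0 \<le> c \<and> c \<le> 1 \<longrightarrow>
              cone_le C (psi_f T U f t (c *\<^sub>R x + (1 - c) *\<^sub>R y))
                        (c *\<^sub>R psi_f T U f t x + (1 - c) *\<^sub>R psi_f T U f t y))"
proof -
  interpret ode_setting C U T f using assms by unfold_locales
  have "convex (D_f T U f t)" if t: "t \<in> time_dom T" for t
  proof (rule convexI)
    fix x y and u v :: real
    assume xy: "x \<in> D_f T U f t" "y \<in> D_f T U f t" and uv: "0 \<le> u" "0 \<le> v" "u + v = 1"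
    have "u \<le> 1" "v = 1 - u" using uv by simp_all
    with flow_convex_combination[OF t xy \<open>0 \<le> u\<close>] show "u *\<^sub>R x + v *\<^sub>R y \<in> D_f T U f t" by simp
  qed
  then show ?thesis using flow_convex_combination by blast
qed

end
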